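(* Let $\Sigma$ be a signature on standard form over a variable system with the de Bruijn property, $F=(F,\sigma,\theta):\mathcal F_\Sigma\to\mathcal C$ a cwf morphism, and $\Pi$ a predicate signature on standard form over $\Sigma$. Let $\mathcal D=(\mathcal C,\mathrm{Pr}^{\mathcal D},\forall',\exists')$ be a first-order hyperdoctrine over $\mathcal C$, and suppose that for each $(\Gamma_R,R)\in\Pi$ an element $R^*\in\mathrm{Pr}^{\mathcal D}(F(\Gamma_R))$ is given. Then there is a unique $F$-based hyperdoctrine morphism $G:\mathcal H_{\Sigma,\Pi,\emptyset}\to\mathcal D$ with $G_{\Gamma_R}(\Gamma_R,R(\mathrm{OV}(\Gamma_R)))=R^*$ for each $(\Gamma_R,R)\in\Pi$.
   Context: Type system: fix an infinite set $V$ of variables with decidable equality and a fresh variable provider: functions $\varphi,\mathsf{fr}$ assigning to each finite $X\subseteq V$ an inhabited $\varphi(X)\subseteq V\setminus X$ and $\mathsf{fr}(X)\in\varphi(X)$; de Bruijn property: $\varphi(X)=\{\mathsf{fr}(X)\}$. Disjoint sets $F$ (function symbols), $T$ (type symbols). Preelements: terms from variables and $F$; pretypes $S(t_1,\ldots,t_n)$, $S\in T$. $\mathrm V(E)$: variables of $E$; $E[\bar a/\bar x]$: simultaneous substitution. Precontext $\Gamma=x_1:A_1,\ldots,x_n:A_n$ with $x_k\in\varphi(\{x_1,\ldots,x_{k-1}\})$, $\mathrm V(A_k)\subseteq\{x_1,\ldots,x_{k-1}\}$; $\mathrm{OV}(\Gamma)=x_1,\ldots,x_n$; $\mathrm{Fresh}(\Gamma)=\varphi(\mathrm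 V(\Gamma))$, $\mathrm{fresh}(\Gamma)=\mathsf{fr}(\mathrm V(\Gamma))$; $E[\bar a/\Gamma]=E[\bar a/x_1,\ldots,x_n]$. Top variables $\mathrm{TV}(\langle\rangle)=\emptyset$, $\mathrm{TV}(\Gamma,x:A)=(\mathrm{TV}(\Gamma)\setminus\mathrm V(A))\cup\{x\}$; a determining sequence is a strictly increasing $\bar i=i_1,\ldots,i_k$ with $\mathrm{TV}(\Gamma)\subseteq\{x_{i_1},\ldots,x_{i_k}\}$, $\bar a_{\bar i}=a_{i_1},\ldots,a_{i_k}$; a declaration is on standard form if $\bar i=1,\ldots,n$ (then $\bar i$ is omitted). Declarations $(\Gamma,S,\bar i)$ and $(\Gamma,f,\bar i,U)$ ($\mathrm V(U)\subseteq\mathrm V(\Gamma)$), each symbol at most once. $\mathcal J(\Sigma)$: smallest set of judgements closed under (R1) $\langle\rangle$ context; (R2) $\Gamma$ context, $A$ type $(\Gamma)$ $\Rightarrow$ $\Gamma,x:A$ context ($x\in\mathrm{Fresh}(\Gamma)$); (R3) $x_1:A_1,\ldots,x_n:A_n$ context $\Rightarrow$ $x_i:A_i\ (x_1:A_1,\ldots,x_n:A_n)$; (R4) $(\Gamma,S,\bar i)\in\Sigma$, $\bar a:\Delta\to\Gamma$ $\Rightarrow$ $S(\bar a_{\bar i})$ type $(\Delta)$; (R5) $(\Gamma,f,\bar i,U)\in\Sigma$, $\bar a:\Delta\to\Gamma$, $U[\bar a/\Gamma]$ type $(\Delta)$ $\Rightarrow$ $f(\bar a_{\bar i}):U[\bar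 a/\Gamma]\ (\Delta)$; where "$\bar a:\Delta\to\Gamma$" abbreviates $\Delta$ context, $\Gamma$ context, $a_k:A_k[a_1,\ldots,a_{k-1}/x_1,\ldots,x_{k-1}]\ (\Delta)$. $\Sigma$ is a signature if declared contexts are contexts and declared $U$ are types in $\mathcal J(\Sigma)$. Cwf: a category $\mathcal C$ with terminal object; classes $\mathrm{Ty}(\Gamma)$ with functorial substitution $A\{f\}$; context extension $\Gamma.A$ with $\mathrm p(A):\Gamma.A\to\Gamma$; classes $\mathrm{Tm}(\Gamma,A)$ with functorial $a\{f\}\in\mathrm{Tm}(\Delta,A\{f\})$; $\mathrm v_A\in\mathrm{Tm}(\Gamma.A,A\{\mathrm p(A)\})$; $\langle f,a\rangle_A:\Delta\to\Gamma.A$ for $a\in\mathrm{Tm}(\Delta,A\{f\})$ with $\mathrm p(A)\langle f,a\rangle_A=f$, $\mathrm v_A\{\langle f,a\rangle_A\}=a$, $\langle\mathrm p(A)h,\mathrm v_A\{h\}\rangle_A=h$, $\langle f,a\rangle_A g=\langle fg,a\{g\}\rangle_A$; $f.A=\langle f\circ\mathrm p(A\{f\}),\mathrm v_{A\{f\}}\rangle_A:\Delta.A\{f\}\to\Gamma.A$. A cwf morphism $(F,\sigma,\theta):\mathcal C\to\mathcal C'$: a functor $F$ preserving the terminal object, $\sigma_\Gamma:\mathrm{Ty}(\Gamma)\to\mathrm{Ty}'(F\Gamma)$ with $\sigma_\Delta(A\{f\})=\sigma_\Gamma(A)\{Ff\}$, $F(\Gamma.A)=F\Gamma.\sigma_\Gamma(A)$,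 $F(\mathrm p(A))=\mathrm p(\sigma_\Gamma(A))$, and $\theta_{\Gamma,A}:\mathrm{Tm}(\Gamma,A)\to\mathrm{Tm}'(F\Gamma,\sigma_\Gamma(A))$ commuting with substitution, with $\theta(\mathrm v_A)=\mathrm v_{\sigma_\Gamma(A)}$ and $F\langle f,a\rangle_A=\langle Ff,\theta(a)\rangle_{\sigma_\Gamma(A)}$. The cwf $\mathcal F_\Sigma$: objects are contexts $\Gamma$ (i.e. ($\Gamma$ context)$\in\mathcal J(\Sigma)$); morphisms $(\Delta,\Gamma,\bar a)$ with $\bar a:\Delta\to\Gamma$ in $\mathcal J(\Sigma)$, composed by substitution, identity $(\Gamma,\Gamma,\mathrm{OV}(\Gamma))$; $\mathrm{Ty}(\Gamma)=\{(\Gamma,A):(A\text{ type }(\Gamma))\in\mathcal J(\Sigma)\}$, $(\Gamma,A)\{(\Delta,\Gamma,\bar a)\}=(\Delta,A[\bar a/\Gamma])$; $\mathrm{Tm}(\Gamma,(\Gamma,A))=\{((\Gamma,A),a):(a:A\ (\Gamma))\in\mathcal J(\Sigma)\}$; $\Gamma.(\Gamma,S)=\langle\Gamma,\mathrm{fresh}(\Gamma):S\rangle$, $\mathrm p=(\Gamma.(\Gamma,S),\Gamma,\mathrm{OV}(\Gamma))$, $\mathrm v=((\Gamma.(\Gamma,S),S),\mathrm{fresh}(\Gamma))$, $\langle(\Delta,\Gamma,\bar s),((\Delta,S[\bar s/\Gamma]),b)\rangle=(\Delta,\Gamma.(\Gamma,S),(\bar s,b))$. Heyting (pre)algebra: a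 preorder $\le$ (not necessarily antisymmetric) with $\top,\bot,\wedge,\vee,\to$ satisfying $\bot\le x\le\top$, $z\le x\wedge y$ iff $z\le x$ and $z\le y$, $x\vee y\le z$ iff $x\le z$ and $y\le z$, $z\le(x\to y)$ iff $z\wedge x\le y$; morphisms are monotone maps preserving the operations and constants. A first-order hyperdoctrine over a cwf $\mathcal C$ is $(\mathcal C,\mathrm{Pr},\forall,\exists)$ with $\mathrm{Pr}:\mathcal C^{\mathrm{op}}\to\mathrm{Heyting}$ a functor ($R\{f\}=\mathrm{Pr}(f)(R)$) and, for $S\in\mathrm{Ty}(\Gamma)$, monotone $\forall_S,\exists_S:\mathrm{Pr}(\Gamma.S)\to\mathrm{Pr}(\Gamma)$ with $Q\le\forall_S(R)$ iff $Q\{\mathrm p(S)\}\le R$, and $\exists_S(R)\le Q$ iff $R\le Q\{\mathrm p(S)\}$ ($Q\in\mathrm{Pr}(\Gamma)$, $R\in\mathrm{Pr}(\Gamma.S)$), and for $f:\Delta\to\Gamma$: $\forall_S(R)\{f\}=\forall_{S\{f\}}(R\{f.S\})$, $\exists_S(R)\{f\}=\exists_{S\{f\}}(R\{f.S\})$. Given a cwf morphism $F=(F,\sigma,\theta):\mathcal C\to\mathcal C'$ and hyperdoctrines $\mathcal H=(\mathcal C,\mathrm{Pr},\forall,\exists)$, $\mathcal H'=(\mathcal C',\mathrm{Pr}',\forall',\exists')$, an $F$-based morphism $G:\mathcal H\to\mathcal H'$ is a family of Heyting morphisms $G_\Gamma:\mathrm{Pr}(\Gamma)\to\mathrm{Pr}'(F\Gamma)$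 with $G_\Delta(R\{f\})=G_\Gamma(R)\{Ff\}$ for $f:\Delta\to\Gamma$, $G_\Gamma(\forall_S R)=\forall'_{\sigma_\Gamma(S)}(G_{\Gamma.S}R)$ and $G_\Gamma(\exists_S R)=\exists'_{\sigma_\Gamma(S)}(G_{\Gamma.S}R)$. Logic: predicate symbols from a set $P$ disjoint from $F\cup T$; a predicate declaration is $(\Gamma,\bar i,R)$ with ($\Gamma$ context)$\in\mathcal J(\Sigma)$, $\bar i$ determining, $R\in P$ (written $(\Gamma,R)$ on standard form); a predicate signature $\Pi$ declares each symbol at most once. $\mathrm{Form}(\Sigma,\Pi)$ is the smallest set of judgements "$\phi$ form $(\Gamma)$" with: $R(\bar a_{\bar i})$ form $(\Delta)$ for $(\Gamma,\bar i,R)\in\Pi$ and $\bar a:\Delta\to\Gamma$ in $\mathcal J(\Sigma)$; $\bot,\top$ form $(\Gamma)$ for contexts $\Gamma$; $(\phi\circ\psi)$ form $(\Gamma)$ for $\circ\in\{\wedge,\vee,\to\}$ from $\phi,\psi$ form $(\Gamma)$; $(Qx:A)\phi$ form $(\Gamma)$ for $Q\in\{\forall,\exists\}$ from $\phi$ form $(\Gamma,x:A)$ (with $(A\text{ type }(\Gamma))\in\mathcal J(\Sigma)$). Capture-avoiding substitution for $\bar a:\Delta\to\Gamma$: $\phi\{(\Delta,\Gamma,\bar a)\}=\phi[\bar a/\Gamma]$ for atomic $\phi$; it commutes with $\top,\bot,\wedge,\vee,\to$; and $((Qx:A)\theta)\{(\Delta,\Gamma,\bar a)\}=(Qy:A[\bar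 a/\Gamma])\,\theta\{(\langle\Delta,y:A[\bar a/\Gamma]\rangle,\langle\Gamma,x:A\rangle,(\bar a,y))\}$ with $y=\mathrm{fresh}(\Delta)$. A sequent is $\phi\Rightarrow_\Gamma\psi$ with $\phi,\psi$ form $(\Gamma)$; a theory is a set of sequents. Write $\mathbf p_\Gamma(x:A)=(\langle\Gamma,x:A\rangle,\Gamma,\mathrm{OV}(\Gamma))$. $\mathrm{Thm}(\Sigma,\Pi,T)$ is the smallest set of sequents containing $T$ and closed under: $\phi\Rightarrow_\Gamma\phi$; cut; $\theta\wedge\psi\Rightarrow_\Gamma\theta$, $\theta\wedge\psi\Rightarrow_\Gamma\psi$, from $\phi\Rightarrow_\Gamma\theta$, $\phi\Rightarrow_\Gamma\psi$ infer $\phi\Rightarrow_\Gamma\theta\wedge\psi$, $\phi\Rightarrow_\Gamma\top$; $\theta\Rightarrow_\Gamma\theta\vee\psi$, $\psi\Rightarrow_\Gamma\theta\vee\psi$, from $\theta\Rightarrow_\Gamma\phi$, $\psi\Rightarrow_\Gamma\phi$ infer $\theta\vee\psi\Rightarrow_\Gamma\phi$, $\bot\Rightarrow_\Gamma\phi$; $\theta\wedge\psi\Rightarrow_\Gamma\phi$ iff $\theta\Rightarrow_\Gamma\psi\to\phi$; $\phi\{\mathbf p_\Gamma(x:A)\}\Rightarrow_{\Gamma,x:A}\psi$ iff $\phi\Rightarrow_\Gamma(\forall x:A)\psi$; $\psi\Rightarrow_{\Gamma,x:A}\phi\{\mathbf p_\Gamma(x:A)\}$ iff $(\exists x:A)\psi\Rightarrow_\Gamma\phi$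 (each "iff" read as two rules); and substitution: from $\phi\Rightarrow_\Gamma\psi$ and $\bar a:\Delta\to\Gamma$ infer $\phi\{(\Delta,\Gamma,\bar a)\}\Rightarrow_\Delta\psi\{(\Delta,\Gamma,\bar a)\}$. Lindenbaum–Tarski hyperdoctrine $\mathcal H_{\Sigma,\Pi,T}=(\mathcal F_\Sigma,\mathrm{Pr}_{\Sigma,\Pi,T},\forall,\exists)$: $\mathrm{Pr}_{\Sigma,\Pi,T}(\Gamma)=\{(\Gamma,\phi):(\phi\text{ form }(\Gamma))\in\mathrm{Form}(\Sigma,\Pi)\}$ ordered by $(\Gamma,\phi)\le(\Gamma,\psi)$ iff $(\phi\Rightarrow_\Gamma\psi)\in\mathrm{Thm}(\Sigma,\Pi,T)$, Heyting operations given by the connectives; $\mathrm{Pr}((\Delta,\Gamma,\bar a))(\Gamma,\phi)=(\Delta,\phi\{(\Delta,\Gamma,\bar a)\})$; $\forall_{(\Gamma,A)}(\langle\Gamma,x:A\rangle,\psi)=(\Gamma,(\forall x:A)\psi)$, $\exists_{(\Gamma,A)}(\langle\Gamma,x:A\rangle,\psi)=(\Gamma,(\exists x:A)\psi)$. $\mathcal H_{\Sigma,\Pi,\emptyset}$ is the case $T=\emptyset$. *)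

theory Defs
  imports Main
begin

section \<open>Variable systems\<close>

definition varsys :: "('v set \<Rightarrow> 'v set) \<Rightarrow> ('v set \<Rightarrow> 'v) \<Rightarrow> bool" where
  "varsys phi fr \<longleftrightarrow> infinite (UNIV :: 'v set) \<and>
     (\<forall>X. finite X \<longrightarrow> phi X \<subseteq> - X \<and> phi X \<noteq> {} \<and> fr X \<in> phi X)"

definition debruijn :: "('v set \<Rightarrow> 'v set) \<Rightarrow> ('v set \<Rightarrow> 'v) \<Rightarrow> bool" where
  "debruijn phi fr \<longleftrightarrow> (\<forall>X. finite X \<longrightarrow> phi X = {fr X})"

section \<open>Preelements, pretypes, precontexts\<close>

datatype ('v, 'f) ptm = Var 'v | App 'f "('v, 'f) ptm list"

datatype ('v, 'f, 't) pty = Ty 't "('v, 'f) ptm list"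

type_synonym ('v, 'f, 't) ctx = "('v \<times> ('v, 'f, 't) pty) list"

fun vars_tm :: "('v, 'f) ptm \<Rightarrow> 'v set" where
  "vars_tm (Var x) = {x}"
| "vars_tm (App f ts) = \<Union> (set (map vars_tm ts))"

fun vars_ty :: "('v, 'f, 't) pty \<Rightarrow> 'v set" where
  "vars_ty (Ty S ts) = \<Union> (set (map vars_tm ts))"

definition ctxV :: "('v, 'f, 't) ctx \<Rightarrow> 'v set" where
  "ctxV G = set (map fst G) \<union> \<Union> (set (map (vars_ty \<circ> snd) G))"

abbreviation OV :: "('v, 'f, 't) ctx \<Rightarrow> 'v list" where
  "OV G \<equiv> map fst G"

fun subst_tm :: "('v \<Rightarrow> ('v, 'f) ptm) \<Rightarrow> ('v, 'f) ptm \<Rightarrow> ('v, 'f) ptm" where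
  "subst_tm s (Var x) = s x"
| "subst_tm s (App f ts) = App f (map (subst_tm s) ts)"

fun subst_ty :: "('v \<Rightarrow> ('v, 'f) ptm) \<Rightarrow> ('v, 'f, 't) pty \<Rightarrow> ('v, 'f, 't) pty" where
  "subst_ty s (Ty S ts) = Ty S (map (subst_tm s) ts)"

definition sub_of :: "'v list \<Rightarrow> ('v, 'f) ptm list \<Rightarrow> 'v \<Rightarrow> ('v, 'f) ptm" where
  "sub_of xs as v = (case map_of (zip xs as) v of Some a \<Rightarrow> a | None \<Rightarrow> Var v)"

definition TV :: "('v, 'f, 't) ctx \<Rightarrow> 'v set" where
  "TV G = foldl (\<lambda>S (x, A). (S - vars_ty A) \<union> {x}) {} G"

text \<open>Determining sequences (indices are 0-based here: index i stands for x_(i+1)).\<close>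
definition determining :: "('v, 'f, 't) ctx \<Rightarrow> nat list \<Rightarrow> bool" where
  "determining G is \<longleftrightarrow> sorted_wrt (<) is \<and> (\<forall>i\<in>set is. i < length G) \<and>
     TV G \<subseteq> (\<lambda>i. fst (G ! i)) ` set is"

section \<open>Signatures and the judgements J(Sigma)\<close>

record ('v, 'f, 't) sig =
  TD :: "'t \<Rightarrow> (('v, 'f, 't) ctx \<times> nat list) option"
  FD :: "'f \<Rightarrow> (('v, 'f, 't) ctx \<times> nat list \<times> ('v, 'f, 't) pty) option"

datatype ('v, 'f, 't) judg =
    Ctx "('v, 'f, 't) ctx"
  | IsType "('v, 'f, 't) ctx" "('v, 'f, 't) pty"
  | HasType "('v, 'f) ptm" "('v, 'f, 't) pty" "('v, 'f, 't) ctx"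

inductive_set Jset :: "('v set \<Rightarrow> 'v set) \<Rightarrow> ('v, 'f, 't) sig \<Rightarrow> ('v, 'f, 't) judg set"
  for phi :: "'v set \<Rightarrow> 'v set" and Sg :: "('v, 'f, 't) sig" where
  R1: "Ctx [] \<in> Jset phi Sg"
| R2: "\<lbrakk> Ctx G \<in> Jset phi Sg; IsType G A \<in> Jset phi Sg; x \<in> phi (ctxV G) \<rbrakk>
       \<Longrightarrow> Ctx (G @ [(x, A)]) \<in> Jset phi Sg"
| R3: "\<lbrakk> Ctx G \<in> Jset phi Sg; i < length G \<rbrakk>
       \<Longrightarrow> HasType (Var (fst (G ! i))) (snd (G ! i)) G \<in> Jset phi Sg"
| R4: "\<lbrakk> TD Sg S = Some (G, is);
         Ctx D \<in> Jset phi Sg; Ctx G \<in> Jset phi Sg; length as = length G;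
         \<forall>k < length G. HasType (as ! k)
             (subst_ty (sub_of (take k (OV G)) (take k as)) (snd (G ! k))) D \<in> Jset phi Sg \<rbrakk>
       \<Longrightarrow> IsType D (Ty S (map ((!) as) is)) \<in> Jset phi Sg"
| R5: "\<lbrakk> FD Sg f = Some (G, is, U);
         Ctx D \<in> Jset phi Sg; Ctx G \<in> Jset phi Sg; length as = length G;
         \<forall>k < length G. HasType (as ! k)
             (subst_ty (sub_of (take k (OV G)) (take k as)) (snd (G ! k))) D \<in> Jset phi Sg;
         IsType D (subst_ty (sub_of (OV G) as) U) \<in> Jset phi Sg \<rbrakk>
       \<Longrightarrow> HasType (App f (map ((!) as) is)) (subst_ty (sub_of (OV G) as) U) D \<in> Jset phi Sg"

text \<open>as : D \<rightarrow> G in J(Sigma).\<close>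
definition smor :: "('v set \<Rightarrow> 'v set) \<Rightarrow> ('v, 'f, 't) sig \<Rightarrow> ('v, 'f, 't) ctx \<Rightarrow>
    ('v, 'f, 't) ctx \<Rightarrow> ('v, 'f) ptm list \<Rightarrow> bool" where
  "smor phi Sg D G as \<longleftrightarrow> Ctx D \<in> Jset phi Sg \<and> Ctx G \<in> Jset phi Sg \<and> length as = length G \<and>
     (\<forall>k < length G. HasType (as ! k)
        (subst_ty (sub_of (take k (OV G)) (take k as)) (snd (G ! k))) D \<in> Jset phi Sg)"

definition is_signature :: "('v set \<Rightarrow> 'v set) \<Rightarrow> ('v, 'f, 't) sig \<Rightarrow> bool" where
  "is_signature phi Sg \<longleftrightarrow>
     (\<forall>S G is. TD Sg S = Some (G, is) \<longrightarrow> Ctx G \<in> Jset phi Sg \<and> determining G is) \<and>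
     (\<forall>f G is U. FD Sg f = Some (G, is, U) \<longrightarrow> Ctx G \<in> Jset phi Sg \<and> determining G is \<and>
        vars_ty U \<subseteq> ctxV G \<and> IsType G U \<in> Jset phi Sg)"

definition sig_standard :: "('v, 'f, 't) sig \<Rightarrow> bool" where
  "sig_standard Sg \<longleftrightarrow>
     (\<forall>S G is. TD Sg S = Some (G, is) \<longrightarrow> is = [0..<length G]) \<and>
     (\<forall>f G is U. FD Sg f = Some (G, is, U) \<longrightarrow> is = [0..<length G])"

section \<open>Categories with families\<close>

record ('o, 'm, 'ty, 'tm) cwf =
  Ob :: "'o set"
  Hom :: "'o \<Rightarrow> 'o \<Rightarrow> 'm set"
  comp :: "'m \<Rightarrow> 'm \<Rightarrow> 'm"   \<comment> \<open>comp g f = g \<circ> f\<close>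
  idm :: "'o \<Rightarrow> 'm"
  trm :: "'o"
  Tys :: "'o \<Rightarrow> 'ty set"
  tsub :: "'ty \<Rightarrow> 'm \<Rightarrow> 'ty"
  Tms :: "'o \<Rightarrow> 'ty \<Rightarrow> 'tm set"
  msub :: "'tm \<Rightarrow> 'm \<Rightarrow> 'tm"
  ext :: "'o \<Rightarrow> 'ty \<Rightarrow> 'o"
  prj :: "'o \<Rightarrow> 'ty \<Rightarrow> 'm"
  vr :: "'o \<Rightarrow> 'ty \<Rightarrow> 'tm"
  pair :: "'o \<Rightarrow> 'ty \<Rightarrow> 'm \<Rightarrow> 'tm \<Rightarrow> 'm"

definition is_cwf :: "('o, 'm, 'ty, 'tm) cwf \<Rightarrow> bool" where
  "is_cwf C \<longleftrightarrow>
    \<comment> \<open>category\<close>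
    (\<forall>X Y f. f \<in> Hom C X Y \<longrightarrow> X \<in> Ob C \<and> Y \<in> Ob C) \<and>
    (\<forall>X\<in>Ob C. idm C X \<in> Hom C X X) \<and>
    (\<forall>X Y Z f g. f \<in> Hom C X Y \<longrightarrow> g \<in> Hom C Y Z \<longrightarrow> comp C g f \<in> Hom C X Z) \<and>
    (\<forall>X Y f. f \<in> Hom C X Y \<longrightarrow> comp C f (idm C X) = f \<and> comp C (idm C Y) f = f) \<and>
    (\<forall>W X Y Z f g h. f \<in> Hom C W X \<longrightarrow> g \<in> Hom C X Y \<longrightarrow> h \<in> Hom C Y Z \<longrightarrow>
        comp C h (comp C g f) = comp C (comp C h g) f) \<and>
    \<comment> \<open>terminal object\<close>
    trm C \<in> Ob C \<and> (\<forall>X\<in>Ob C. \<exists>!f. f \<in> Hom C X (trm C)) \<and>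
    \<comment> \<open>types\<close>
    (\<forall>X Y A f. A \<in> Tys C Y \<longrightarrow> f \<in> Hom C X Y \<longrightarrow> tsub C A f \<in> Tys C X) \<and>
    (\<forall>X\<in>Ob C. \<forall>A\<in>Tys C X. tsub C A (idm C X) = A) \<and>
    (\<forall>X Y Z A f g. A \<in> Tys C Z \<longrightarrow> f \<in> Hom C X Y \<longrightarrow> g \<in> Hom C Y Z \<longrightarrow>
        tsub C A (comp C g f) = tsub C (tsub C A g) f) \<and>
    \<comment> \<open>terms\<close>
    (\<forall>X Y A a f. a \<in> Tms C Y A \<longrightarrow> f \<in> Hom C X Y \<longrightarrow> msub C a f \<in> Tms C X (tsub C A f)) \<and>
    (\<forall>X\<in>Ob C. \<forall>A\<in>Tys C X. \<forall>a\<in>Tms C X A. msub C a (idm C X) = a) \<and>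
    (\<forall>X Y Z A a f g. A \<in> Tys C Z \<longrightarrow> a \<in> Tms C Z A \<longrightarrow> f \<in> Hom C X Y \<longrightarrow> g \<in> Hom C Y Z \<longrightarrow>
        msub C a (comp C g f) = msub C (msub C a g) f) \<and>
    \<comment> \<open>context extension\<close>
    (\<forall>X\<in>Ob C. \<forall>A\<in>Tys C X. ext C X A \<in> Ob C \<and> prj C X A \<in> Hom C (ext C X A) X \<and>
        vr C X A \<in> Tms C (ext C X A) (tsub C A (prj C X A))) \<and>
    (\<forall>X Y A f a. A \<in> Tys C Y \<longrightarrow> f \<in> Hom C X Y \<longrightarrow> a \<in> Tms C X (tsub C A f) \<longrightarrow>
        pair C Y A f a \<in> Hom C X (ext C Y A) \<and>
        comp C (prj C Y A) (pair C Y A f a) = f \<and>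
        msub C (vr C Y A) (pair C Y A f a) = a) \<and>
    (\<forall>X Y A h. A \<in> Tys C Y \<longrightarrow> h \<in> Hom C X (ext C Y A) \<longrightarrow>
        pair C Y A (comp C (prj C Y A) h) (msub C (vr C Y A) h) = h) \<and>
    (\<forall>W X Y A f a g. A \<in> Tys C Y \<longrightarrow> f \<in> Hom C X Y \<longrightarrow> a \<in> Tms C X (tsub C A f) \<longrightarrow>
        g \<in> Hom C W X \<longrightarrow>
        comp C (pair C Y A f a) g = pair C Y A (comp C f g) (msub C a g))"

text \<open>f.A = <f \<circ> p(A{f}), v_(A{f})>_A : Delta.A{f} \<rightarrow> Gamma.A, for f : Delta \<rightarrow> Gamma.\<close>
definition qmor :: "('o, 'm, 'ty, 'tm) cwf \<Rightarrow> 'o \<Rightarrow> 'o \<Rightarrow> 'm \<Rightarrow> 'ty \<Rightarrow> 'm" where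
  "qmor C D G f A = pair C G A (comp C f (prj C D (tsub C A f))) (vr C D (tsub C A f))"

definition is_terminal :: "('o, 'm, 'ty, 'tm) cwf \<Rightarrow> 'o \<Rightarrow> bool" where
  "is_terminal C T \<longleftrightarrow> T \<in> Ob C \<and> (\<forall>X\<in>Ob C. \<exists>!f. f \<in> Hom C X T)"

definition is_cwf_mor :: "('o, 'm, 'ty, 'tm) cwf \<Rightarrow> ('o2, 'm2, 'ty2, 'tm2) cwf \<Rightarrow>
    ('o \<Rightarrow> 'o2) \<Rightarrow> ('m \<Rightarrow> 'm2) \<Rightarrow> ('o \<Rightarrow> 'ty \<Rightarrow> 'ty2) \<Rightarrow> ('o \<Rightarrow> 'ty \<Rightarrow> 'tm \<Rightarrow> 'tm2) \<Rightarrow> bool" where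
  "is_cwf_mor C C' Fo Fm sg th \<longleftrightarrow>
    \<comment> \<open>functor\<close>
    (\<forall>X\<in>Ob C. Fo X \<in> Ob C') \<and>
    (\<forall>X Y f. f \<in> Hom C X Y \<longrightarrow> Fm f \<in> Hom C' (Fo X) (Fo Y)) \<and>
    (\<forall>X\<in>Ob C. Fm (idm C X) = idm C' (Fo X)) \<and>
    (\<forall>X Y Z f g. f \<in> Hom C X Y \<longrightarrow> g \<in> Hom C Y Z \<longrightarrow> Fm (comp C g f) = comp C' (Fm g) (Fm f)) \<and>
    \<comment> \<open>preserves the terminal object\<close>
    is_terminal C' (Fo (trm C)) \<and>
    \<comment> \<open>types\<close>
    (\<forall>X\<in>Ob C. \<forall>A\<in>Tys C X. sg X A \<in> Tys C' (Fo X)) \<and>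
    (\<forall>X Y A f. A \<in> Tys C Y \<longrightarrow> f \<in> Hom C X Y \<longrightarrow> sg X (tsub C A f) = tsub C' (sg Y A) (Fm f)) \<and>
    (\<forall>X\<in>Ob C. \<forall>A\<in>Tys C X. Fo (ext C X A) = ext C' (Fo X) (sg X A) \<and>
        Fm (prj C X A) = prj C' (Fo X) (sg X A)) \<and>
    \<comment> \<open>terms\<close>
    (\<forall>X\<in>Ob C. \<forall>A\<in>Tys C X. \<forall>a\<in>Tms C X A. th X A a \<in> Tms C' (Fo X) (sg X A)) \<and>
    (\<forall>X Y A a f. A \<in> Tys C Y \<longrightarrow> a \<in> Tms C Y A \<longrightarrow> f \<in> Hom C X Y \<longrightarrow>
        th X (tsub C A f) (msub C a f) = msub C' (th Y A a) (Fm f)) \<and>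
    (\<forall>X\<in>Ob C. \<forall>A\<in>Tys C X.
        th (ext C X A) (tsub C A (prj C X A)) (vr C X A) = vr C' (Fo X) (sg X A)) \<and>
    (\<forall>X Y A f a. A \<in> Tys C Y \<longrightarrow> f \<in> Hom C X Y \<longrightarrow> a \<in> Tms C X (tsub C A f) \<longrightarrow>
        Fm (pair C Y A f a) = pair C' (Fo Y) (sg Y A) (Fm f) (th X (tsub C A f) a))"

section \<open>The cwf F_Sigma\<close>

type_synonym ('v, 'f, 't) smorph = "('v, 'f, 't) ctx \<times> ('v, 'f, 't) ctx \<times> ('v, 'f) ptm list"

definition FSig :: "('v set \<Rightarrow> 'v set) \<Rightarrow> ('v set \<Rightarrow> 'v) \<Rightarrow> ('v, 'f, 't) sig \<Rightarrow>
   (('v, 'f, 't) ctx, ('v, 'f, 't) smorph, ('v, 'f, 't) ctx \<times> ('v, 'f, 't) pty,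
    (('v, 'f, 't) ctx \<times> ('v, 'f, 't) pty) \<times> ('v, 'f) ptm) cwf" where
  "FSig phi fr Sg = \<lparr>
     Ob = {G. Ctx G \<in> Jset phi Sg},
     Hom = (\<lambda>D G. {(D, G, as) | as. smor phi Sg D G as}),
     comp = (\<lambda>(D, G, as) (T, D', bs). (T, G, map (subst_tm (sub_of (OV D') bs)) as)),
     idm = (\<lambda>G. (G, G, map Var (OV G))),
     trm = [],
     Tys = (\<lambda>G. {(G, A) | A. IsType G A \<in> Jset phi Sg}),
     tsub = (\<lambda>(G', A) (D, G, as). (D, subst_ty (sub_of (OV G) as) A)),
     Tms = (\<lambda>G T. {(T, a) | a. fst T = G \<and> HasType a (snd T) G \<in> Jset phi Sg}),
     msub = (\<lambda>((G', A), a) (D, G, as).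
               ((D, subst_ty (sub_of (OV G) as) A), subst_tm (sub_of (OV G) as) a)),
     ext = (\<lambda>G (G', S). G @ [(fr (ctxV G), S)]),
     prj = (\<lambda>G (G', S). (G @ [(fr (ctxV G), S)], G, map Var (OV G))),
     vr = (\<lambda>G (G', S). ((G @ [(fr (ctxV G), S)], S), Var (fr (ctxV G)))),
     pair = (\<lambda>G (G', S) (D, G'', ss) (T, b). (D, G @ [(fr (ctxV G), S)], ss @ [b]))
   \<rparr>"

section \<open>Heyting prealgebras and hyperdoctrines\<close>

definition is_heyting :: "'a set \<Rightarrow> ('a \<Rightarrow> 'a \<Rightarrow> bool) \<Rightarrow> 'a \<Rightarrow> 'a \<Rightarrow>
    ('a \<Rightarrow> 'a \<Rightarrow> 'a) \<Rightarrow> ('a \<Rightarrow> 'a \<Rightarrow> 'a) \<Rightarrow> ('a \<Rightarrow> 'a \<Rightarrow> 'a) \<Rightarrow> bool" where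
  "is_heyting X le tp bt mt jn im \<longleftrightarrow>
     (\<forall>x\<in>X. le x x) \<and> (\<forall>x\<in>X. \<forall>y\<in>X. \<forall>z\<in>X. le x y \<longrightarrow> le y z \<longrightarrow> le x z) \<and>
     tp \<in> X \<and> bt \<in> X \<and>
     (\<forall>x\<in>X. \<forall>y\<in>X. mt x y \<in> X \<and> jn x y \<in> X \<and> im x y \<in> X) \<and>
     (\<forall>x\<in>X. le bt x \<and> le x tp) \<and>
     (\<forall>x\<in>X. \<forall>y\<in>X. \<forall>z\<in>X. (le z (mt x y) \<longleftrightarrow> le z x \<and> le z y) \<and>
        (le (jn x y) z \<longleftrightarrow> le x z \<and> le y z) \<and>
        (le z (im x y) \<longleftrightarrow> le (mt z x) y))"

definition is_heyting_mor :: "'a set \<Rightarrow> ('a \<Rightarrow> 'a \<Rightarrow> bool) \<Rightarrow> 'a \<Rightarrow> 'a \<Rightarrow>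
    ('a \<Rightarrow> 'a \<Rightarrow> 'a) \<Rightarrow> ('a \<Rightarrow> 'a \<Rightarrow> 'a) \<Rightarrow> ('a \<Rightarrow> 'a \<Rightarrow> 'a) \<Rightarrow>
    'b set \<Rightarrow> ('b \<Rightarrow> 'b \<Rightarrow> bool) \<Rightarrow> 'b \<Rightarrow> 'b \<Rightarrow>
    ('b \<Rightarrow> 'b \<Rightarrow> 'b) \<Rightarrow> ('b \<Rightarrow> 'b \<Rightarrow> 'b) \<Rightarrow> ('b \<Rightarrow> 'b \<Rightarrow> 'b) \<Rightarrow> ('a \<Rightarrow> 'b) \<Rightarrow> bool" where
  "is_heyting_mor X le tp bt mt jn im X' le' tp' bt' mt' jn' im' h \<longleftrightarrow>
     (\<forall>x\<in>X. h x \<in> X') \<and>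
     (\<forall>x\<in>X. \<forall>y\<in>X. le x y \<longrightarrow> le' (h x) (h y)) \<and>
     h tp = tp' \<and> h bt = bt' \<and>
     (\<forall>x\<in>X. \<forall>y\<in>X. h (mt x y) = mt' (h x) (h y) \<and> h (jn x y) = jn' (h x) (h y) \<and>
        h (im x y) = im' (h x) (h y))"

record ('o, 'm, 'ty, 'pr) hdoc =
  Pr :: "'o \<Rightarrow> 'pr set"
  ple :: "'o \<Rightarrow> 'pr \<Rightarrow> 'pr \<Rightarrow> bool"
  ptop :: "'o \<Rightarrow> 'pr"
  pbot :: "'o \<Rightarrow> 'pr"
  pmeet :: "'o \<Rightarrow> 'pr \<Rightarrow> 'pr \<Rightarrow> 'pr"
  pjoin :: "'o \<Rightarrow> 'pr \<Rightarrow> 'pr \<Rightarrow> 'pr"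
  pimp :: "'o \<Rightarrow> 'pr \<Rightarrow> 'pr \<Rightarrow> 'pr"
  psub :: "'m \<Rightarrow> 'pr \<Rightarrow> 'pr"
  pall :: "'o \<Rightarrow> 'ty \<Rightarrow> 'pr \<Rightarrow> 'pr"
  pex :: "'o \<Rightarrow> 'ty \<Rightarrow> 'pr \<Rightarrow> 'pr"

abbreviation heyting_at :: "('o, 'm, 'ty, 'pr) hdoc \<Rightarrow> 'o \<Rightarrow> bool" where
  "heyting_at H X \<equiv> is_heyting (Pr H X) (ple H X) (ptop H X) (pbot H X)
     (pmeet H X) (pjoin H X) (pimp H X)"

definition is_hdoc :: "('o, 'm, 'ty, 'tm) cwf \<Rightarrow> ('o, 'm, 'ty, 'pr) hdoc \<Rightarrow> bool" where
  "is_hdoc C H \<longleftrightarrow>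
    (\<forall>X\<in>Ob C. heyting_at H X) \<and>
    (\<forall>X Y f. f \<in> Hom C X Y \<longrightarrow>
       is_heyting_mor (Pr H Y) (ple H Y) (ptop H Y) (pbot H Y) (pmeet H Y) (pjoin H Y) (pimp H Y)
         (Pr H X) (ple H X) (ptop H X) (pbot H X) (pmeet H X) (pjoin H X) (pimp H X) (psub H f)) \<and>
    (\<forall>X\<in>Ob C. \<forall>R\<in>Pr H X. psub H (idm C X) R = R) \<and>
    (\<forall>X Y Z f g. f \<in> Hom C X Y \<longrightarrow> g \<in> Hom C Y Z \<longrightarrow>
       (\<forall>R\<in>Pr H Z. psub H (comp C g f) R = psub H f (psub H g R))) \<and>
    (\<forall>X\<in>Ob C. \<forall>S\<in>Tys C X.
       (\<forall>R\<in>Pr H (ext C X S). pall H X S R \<in> Pr H X \<and> pex H X S R \<in> Pr H X) \<and>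
       (\<forall>R\<in>Pr H (ext C X S). \<forall>R'\<in>Pr H (ext C X S). ple H (ext C X S) R R' \<longrightarrow>
          ple H X (pall H X S R) (pall H X S R') \<and> ple H X (pex H X S R) (pex H X S R')) \<and>
       (\<forall>Q\<in>Pr H X. \<forall>R\<in>Pr H (ext C X S).
          (ple H X Q (pall H X S R) \<longleftrightarrow> ple H (ext C X S) (psub H (prj C X S) Q) R) \<and>
          (ple H X (pex H X S R) Q \<longleftrightarrow> ple H (ext C X S) R (psub H (prj C X S) Q)))) \<and>
    (\<forall>X Y S f. S \<in> Tys C Y \<longrightarrow> f \<in> Hom C X Y \<longrightarrow> (\<forall>R\<in>Pr H (ext C Y S).
       psub H f (pall H Y S R) = pall H X (tsub C S f) (psub H (qmor C X Y f S) R) \<and>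
       psub H f (pex H Y S R) = pex H X (tsub C S f) (psub H (qmor C X Y f S) R)))"

definition is_Fbased_mor :: "('o, 'm, 'ty, 'tm) cwf \<Rightarrow> ('o, 'm, 'ty, 'pr) hdoc \<Rightarrow>
    ('o2, 'm2, 'ty2, 'tm2) cwf \<Rightarrow> ('o2, 'm2, 'ty2, 'pr2) hdoc \<Rightarrow>
    ('o \<Rightarrow> 'o2) \<Rightarrow> ('m \<Rightarrow> 'm2) \<Rightarrow> ('o \<Rightarrow> 'ty \<Rightarrow> 'ty2) \<Rightarrow> ('o \<Rightarrow> 'pr \<Rightarrow> 'pr2) \<Rightarrow> bool" where
  "is_Fbased_mor C H C' H' Fo Fm sg G \<longleftrightarrow>
    (\<forall>X\<in>Ob C. is_heyting_mor (Pr H X) (ple H X) (ptop H X) (pbot H X) (pmeet H X) (pjoin H X) (pimp H X)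
       (Pr H' (Fo X)) (ple H' (Fo X)) (ptop H' (Fo X)) (pbot H' (Fo X)) (pmeet H' (Fo X))
       (pjoin H' (Fo X)) (pimp H' (Fo X)) (G X)) \<and>
    (\<forall>X Y f. f \<in> Hom C X Y \<longrightarrow> (\<forall>R\<in>Pr H Y. G X (psub H f R) = psub H' (Fm f) (G Y R))) \<and>
    (\<forall>X\<in>Ob C. \<forall>S\<in>Tys C X. \<forall>R\<in>Pr H (ext C X S).
       G X (pall H X S R) = pall H' (Fo X) (sg X S) (G (ext C X S) R) \<and>
       G X (pex H X S R) = pex H' (Fo X) (sg X S) (G (ext C X S) R))"

section \<open>Formulas, theorems, and the Lindenbaum-Tarski hyperdoctrine\<close>

datatype ('v, 'f, 't, 'p) form =
    Pred 'p "('v, 'f) ptm list"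
  | FBot | FTop
  | Conj "('v, 'f, 't, 'p) form" "('v, 'f, 't, 'p) form"
  | Disj "('v, 'f, 't, 'p) form" "('v, 'f, 't, 'p) form"
  | Imp "('v, 'f, 't, 'p) form" "('v, 'f, 't, 'p) form"
  | All 'v "('v, 'f, 't) pty" "('v, 'f, 't, 'p) form"
  | Ex 'v "('v, 'f, 't) pty" "('v, 'f, 't, 'p) form"

type_synonym ('v, 'f, 't, 'p) psig = "'p \<Rightarrow> (('v, 'f, 't) ctx \<times> nat list) option"

definition is_pred_sig :: "('v set \<Rightarrow> 'v set) \<Rightarrow> ('v, 'f, 't) sig \<Rightarrow> ('v, 'f, 't, 'p) psig \<Rightarrow> bool" where
  "is_pred_sig phi Sg Ps \<longleftrightarrow>
     (\<forall>R G is. Ps R = Some (G, is) \<longrightarrow> Ctx G \<in> Jset phi Sg \<and> determining G is)"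

definition pred_standard :: "('v, 'f, 't, 'p) psig \<Rightarrow> bool" where
  "pred_standard Ps \<longleftrightarrow> (\<forall>R G is. Ps R = Some (G, is) \<longrightarrow> is = [0..<length G])"

inductive_set Form :: "('v set \<Rightarrow> 'v set) \<Rightarrow> ('v, 'f, 't) sig \<Rightarrow> ('v, 'f, 't, 'p) psig \<Rightarrow>
    (('v, 'f, 't) ctx \<times> ('v, 'f, 't, 'p) form) set"
  for phi Sg Ps where
  atom: "\<lbrakk> Ps R = Some (G, is); smor phi Sg D G as \<rbrakk> \<Longrightarrow> (D, Pred R (map ((!) as) is)) \<in> Form phi Sg Ps"
| bot: "Ctx G \<in> Jset phi Sg \<Longrightarrow> (G, FBot) \<in> Form phi Sg Ps"
| top: "Ctx G \<in> Jset phi Sg \<Longrightarrow> (G, FTop) \<in> Form phi Sg Ps"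
| conj: "\<lbrakk> (G, a) \<in> Form phi Sg Ps; (G, b) \<in> Form phi Sg Ps \<rbrakk> \<Longrightarrow> (G, Conj a b) \<in> Form phi Sg Ps"
| disj: "\<lbrakk> (G, a) \<in> Form phi Sg Ps; (G, b) \<in> Form phi Sg Ps \<rbrakk> \<Longrightarrow> (G, Disj a b) \<in> Form phi Sg Ps"
| imp: "\<lbrakk> (G, a) \<in> Form phi Sg Ps; (G, b) \<in> Form phi Sg Ps \<rbrakk> \<Longrightarrow> (G, Imp a b) \<in> Form phi Sg Ps"
| all: "\<lbrakk> (G @ [(x, A)], a) \<in> Form phi Sg Ps; IsType G A \<in> Jset phi Sg \<rbrakk> \<Longrightarrow> (G, All x A a) \<in> Form phi Sg Ps"
| ex: "\<lbrakk> (G @ [(x, A)], a) \<in> Form phi Sg Ps; IsType G A \<in> Jset phi Sg \<rbrakk> \<Longrightarrow> (G, Ex x A a) \<in> Form phi Sg Ps"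

primrec fsub :: "('v set \<Rightarrow> 'v) \<Rightarrow> ('v, 'f, 't) ctx \<Rightarrow> ('v, 'f, 't) ctx \<Rightarrow> ('v, 'f) ptm list \<Rightarrow>
    ('v, 'f, 't, 'p) form \<Rightarrow> ('v, 'f, 't, 'p) form" where
  "fsub fr D G as (Pred R ts) = Pred R (map (subst_tm (sub_of (OV G) as)) ts)"
| "fsub fr D G as FBot = FBot"
| "fsub fr D G as FTop = FTop"
| "fsub fr D G as (Conj a b) = Conj (fsub fr D G as a) (fsub fr D G as b)"
| "fsub fr D G as (Disj a b) = Disj (fsub fr D G as a) (fsub fr D G as b)"
| "fsub fr D G as (Imp a b) = Imp (fsub fr D G as a) (fsub fr D G as b)"
| "fsub fr D G as (All x A a) =
     (let y = fr (ctxV D); A' = subst_ty (sub_of (OV G) as) A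
      in All y A' (fsub fr (D @ [(y, A')]) (G @ [(x, A)]) (as @ [Var y]) a))"
| "fsub fr D G as (Ex x A a) =
     (let y = fr (ctxV D); A' = subst_ty (sub_of (OV G) as) A
      in Ex y A' (fsub fr (D @ [(y, A')]) (G @ [(x, A)]) (as @ [Var y]) a))"

abbreviation wk :: "('v set \<Rightarrow> 'v) \<Rightarrow> ('v, 'f, 't) ctx \<Rightarrow> 'v \<Rightarrow> ('v, 'f, 't) pty \<Rightarrow>
    ('v, 'f, 't, 'p) form \<Rightarrow> ('v, 'f, 't, 'p) form" where
  "wk fr G x A a \<equiv> fsub fr (G @ [(x, A)]) G (map Var (OV G)) a"

type_synonym ('v, 'f, 't, 'p) sequent =
  "('v, 'f, 't) ctx \<times> ('v, 'f, 't, 'p) form \<times> ('v, 'f, 't, 'p) form"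

definition is_seq :: "('v set \<Rightarrow> 'v set) \<Rightarrow> ('v, 'f, 't) sig \<Rightarrow> ('v, 'f, 't, 'p) psig \<Rightarrow>
    ('v, 'f, 't, 'p) sequent \<Rightarrow> bool" where
  "is_seq phi Sg Ps s \<longleftrightarrow> (case s of (G, a, b) \<Rightarrow> (G, a) \<in> Form phi Sg Ps \<and> (G, b) \<in> Form phi Sg Ps)"

inductive_set Thm :: "('v set \<Rightarrow> 'v set) \<Rightarrow> ('v set \<Rightarrow> 'v) \<Rightarrow> ('v, 'f, 't) sig \<Rightarrow> ('v, 'f, 't, 'p) psig \<Rightarrow>
    ('v, 'f, 't, 'p) sequent set \<Rightarrow> ('v, 'f, 't, 'p) sequent set"
  for phi fr Sg Ps T where
  ax: "\<lbrakk> s \<in> T; is_seq phi Sg Ps s \<rbrakk> \<Longrightarrow> s \<in> Thm phi fr Sg Ps T"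
| idt: "is_seq phi Sg Ps (G, a, a) \<Longrightarrow> (G, a, a) \<in> Thm phi fr Sg Ps T"
| cut: "\<lbrakk> (G, a, b) \<in> Thm phi fr Sg Ps T; (G, b, c) \<in> Thm phi fr Sg Ps T; is_seq phi Sg Ps (G, a, c) \<rbrakk>
        \<Longrightarrow> (G, a, c) \<in> Thm phi fr Sg Ps T"
| conjE1: "is_seq phi Sg Ps (G, Conj a b, a) \<Longrightarrow> (G, Conj a b, a) \<in> Thm phi fr Sg Ps T"
| conjE2: "is_seq phi Sg Ps (G, Conj a b, b) \<Longrightarrow> (G, Conj a b, b) \<in> Thm phi fr Sg Ps T"
| conjI: "\<lbrakk> (G, c, a) \<in> Thm phi fr Sg Ps T; (G, c, b) \<in> Thm phi fr Sg Ps T; is_seq phi Sg Ps (G, c, Conj a b) \<rbrakk>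
        \<Longrightarrow> (G, c, Conj a b) \<in> Thm phi fr Sg Ps T"
| topI: "is_seq phi Sg Ps (G, c, FTop) \<Longrightarrow> (G, c, FTop) \<in> Thm phi fr Sg Ps T"
| disjI1: "is_seq phi Sg Ps (G, a, Disj a b) \<Longrightarrow> (G, a, Disj a b) \<in> Thm phi fr Sg Ps T"
| disjI2: "is_seq phi Sg Ps (G, b, Disj a b) \<Longrightarrow> (G, b, Disj a b) \<in> Thm phi fr Sg Ps T"
| disjE: "\<lbrakk> (G, a, c) \<in> Thm phi fr Sg Ps T; (G, b, c) \<in> Thm phi fr Sg Ps T; is_seq phi Sg Ps (G, Disj a b, c) \<rbrakk>
        \<Longrightarrow> (G, Disj a b, c) \<in> Thm phi fr Sg Ps T"
| botE: "is_seq phi Sg Ps (G, FBot, c) \<Longrightarrow> (G, FBot, c) \<in> Thm phi fr Sg Ps T"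
| impI: "\<lbrakk> (G, Conj a b, c) \<in> Thm phi fr Sg Ps T; is_seq phi Sg Ps (G, a, Imp b c) \<rbrakk>
        \<Longrightarrow> (G, a, Imp b c) \<in> Thm phi fr Sg Ps T"
| impE: "\<lbrakk> (G, a, Imp b c) \<in> Thm phi fr Sg Ps T; is_seq phi Sg Ps (G, Conj a b, c) \<rbrakk>
        \<Longrightarrow> (G, Conj a b, c) \<in> Thm phi fr Sg Ps T"
| allI: "\<lbrakk> (G @ [(x, A)], wk fr G x A a, b) \<in> Thm phi fr Sg Ps T; is_seq phi Sg Ps (G, a, All x A b) \<rbrakk>
        \<Longrightarrow> (G, a, All x A b) \<in> Thm phi fr Sg Ps T"
| allE: "\<lbrakk> (G, a, All x A b) \<in> Thm phi fr Sg Ps T; is_seq phi Sg Ps (G @ [(x, A)], wk fr G x A a, b) \<rbrakk>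
        \<Longrightarrow> (G @ [(x, A)], wk fr G x A a, b) \<in> Thm phi fr Sg Ps T"
| exE: "\<lbrakk> (G @ [(x, A)], b, wk fr G x A a) \<in> Thm phi fr Sg Ps T; is_seq phi Sg Ps (G, Ex x A b, a) \<rbrakk>
        \<Longrightarrow> (G, Ex x A b, a) \<in> Thm phi fr Sg Ps T"
| exI: "\<lbrakk> (G, Ex x A b, a) \<in> Thm phi fr Sg Ps T; is_seq phi Sg Ps (G @ [(x, A)], b, wk fr G x A a) \<rbrakk>
        \<Longrightarrow> (G @ [(x, A)], b, wk fr G x A a) \<in> Thm phi fr Sg Ps T"
| subst: "\<lbrakk> (G, a, b) \<in> Thm phi fr Sg Ps T; smor phi Sg D G as;
           is_seq phi Sg Ps (D, fsub fr D G as a, fsub fr D G as b) \<rbrakk>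
        \<Longrightarrow> (D, fsub fr D G as a, fsub fr D G as b) \<in> Thm phi fr Sg Ps T"

definition LT :: "('v set \<Rightarrow> 'v set) \<Rightarrow> ('v set \<Rightarrow> 'v) \<Rightarrow> ('v, 'f, 't) sig \<Rightarrow> ('v, 'f, 't, 'p) psig \<Rightarrow>
    ('v, 'f, 't, 'p) sequent set \<Rightarrow>
    (('v, 'f, 't) ctx, ('v, 'f, 't) smorph, ('v, 'f, 't) ctx \<times> ('v, 'f, 't) pty,
     ('v, 'f, 't) ctx \<times> ('v, 'f, 't, 'p) form) hdoc" where
  "LT phi fr Sg Ps T = \<lparr>
     Pr = (\<lambda>G. {(G, a) | a. (G, a) \<in> Form phi Sg Ps}),
     ple = (\<lambda>G (G1, a) (G2, b). (G, a, b) \<in> Thm phi fr Sg Ps T),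
     ptop = (\<lambda>G. (G, FTop)),
     pbot = (\<lambda>G. (G, FBot)),
     pmeet = (\<lambda>G (G1, a) (G2, b). (G, Conj a b)),
     pjoin = (\<lambda>G (G1, a) (G2, b). (G, Disj a b)),
     pimp = (\<lambda>G (G1, a) (G2, b). (G, Imp a b)),
     psub = (\<lambda>(D, G, as) (G', a). (D, fsub fr D G as a)),
     pall = (\<lambda>G (G', A) (GA, b). (G, All (fst (last GA)) A b)),
     pex = (\<lambda>G (G', A) (GA, b). (G, Ex (fst (last GA)) A b))
   \<rparr>"

end

theory Submission
  imports Defs
begin

text \<open>
  The morphism is forced. An F-based morphism must send connectives to the Heyting operations
  of \<open>D\<close>, quantifiers to the adjoints \<open>\<forall>'\<close>, \<open>\<exists>'\<close>, and the atom \<open>R(as)\<close>, which is the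
  substitution instance \<open>R(OV \<Gamma>\<^sub>R){as}\<close>, to \<open>R\<^sup>*{F as}\<close>; so it agrees with the structural
  interpretation of formulas. Conversely this interpretation is an F-based morphism: it commutes
  with capture-avoiding substitution (under a binder this is the Beck-Chevalley condition of \<open>D\<close>,
  because \<open>F\<close> sends the extended substitution \<open>(as, y)\<close> to the morphism \<open>(F as).A\<close>), and it is
  sound for the sequent calculus, each rule being a Heyting law or one of the quantifier
  adjunctions of \<open>D\<close>. The de Bruijn property makes every bound variable equal to \<open>fresh(\<Gamma>)\<close>,
  so that the body of a quantified formula lives over the context extension \<open>\<Gamma>.A\<close> of \<open>F\<^sub>\<Sigma>\<close>.
\<close>

section \<open>Substitution and the judgements of a signature\<close>

lemma finite_vars_tm: "finite (vars_tm t)"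
  by (induction t) auto

lemma finite_vars_ty: "finite (vars_ty A)"
  by (cases A) (auto simp: finite_vars_tm)

lemma finite_ctxV: "finite (ctxV G)"
  by (auto simp: ctxV_def finite_vars_ty)

lemma set_OV_subset_ctxV: "set (OV G) \<subseteq> ctxV G"
  by (auto simp: ctxV_def)

lemma subst_tm_cong: "(\<And>v. v \<in> vars_tm t \<Longrightarrow> s v = s' v) \<Longrightarrow> subst_tm s t = subst_tm s' t"
  by (induction t) auto

lemma subst_ty_cong: "(\<And>v. v \<in> vars_ty A \<Longrightarrow> s v = s' v) \<Longrightarrow> subst_ty s A = subst_ty s' A"
  by (cases A) (auto intro: subst_tm_cong)

lemma subst_tm_Var [simp]: "subst_tm Var t = t"
  by (induction t) (auto simp: map_idI)

lemma subst_ty_Var [simp]: "subst_ty Var A = A"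
  by (cases A) (auto simp: map_idI)

lemma subst_tm_subst_tm: "subst_tm s (subst_tm s' t) = subst_tm (subst_tm s \<circ> s') t"
  by (induction t) auto

lemma subst_ty_subst_ty: "subst_ty s (subst_ty s' A) = subst_ty (subst_tm s \<circ> s') A"
  by (cases A) (auto simp: subst_tm_subst_tm)

lemma sub_of_Var [simp]: "sub_of xs (map Var xs) = Var"
proof
  fix v show "sub_of xs (map Var xs) v = Var v"
    by (induction xs) (auto simp: sub_of_def)
qed

lemma sub_of_map_Var [simp]: "sub_of (map f xs) (map (Var \<circ> f) xs) = Var"
  using sub_of_Var[of "map f xs"] by (simp only: map_map)

lemma map_subst_tm_Var [simp]: "map (subst_tm Var) ts = ts"
  by (simp add: map_idI)

lemma sub_of_nth:
  "distinct xs \<Longrightarrow> length xs = length as \<Longrightarrow> i < length xs \<Longrightarrow> sub_of xs as (xs ! i) = as ! i"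
  by (simp add: sub_of_def map_of_zip_nth)

lemma map_sub_of_self: "distinct xs \<Longrightarrow> length xs = length as \<Longrightarrow> map (sub_of xs as) xs = as"
  by (rule nth_equalityI) (auto simp: sub_of_nth)

lemma sub_of_take:
  assumes "distinct xs" and "length xs = length as" and "v \<in> set (take k xs)"
  shows "sub_of (take k xs) (take k as) v = sub_of xs as v"
proof -
  obtain j where j: "j < length (take k xs)" "v = take k xs ! j"
    using assms(3) by (auto simp: in_set_conv_nth)
  then have "sub_of (take k xs) (take k as) v = take k as ! j"
    unfolding j(2) using assms(1,2) by (intro sub_of_nth) auto
  also have "\<dots> = sub_of xs as v"
    using j assms(1,2) by (simp add: sub_of_nth)
  finally show ?thesis .
qed

lemma subst_tm_sub_of:
  "length xs = length bs \<Longrightarrow> v \<in> set xs \<Longrightarrow>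
   subst_tm s (sub_of xs bs v) = sub_of xs (map (subst_tm s) bs) v"
proof (induction xs arbitrary: bs)
  case (Cons x xs)
  then show ?case by (cases bs) (auto simp: sub_of_def)
qed simp

lemma subst_ty_sub_of:
  "length xs = length bs \<Longrightarrow> vars_ty A \<subseteq> set xs \<Longrightarrow>
   subst_ty s (subst_ty (sub_of xs bs) A) = subst_ty (sub_of xs (map (subst_tm s) bs)) A"
  unfolding subst_ty_subst_ty by (rule subst_ty_cong) (auto simp: subst_tm_sub_of)

lemma Jset_wf:
  assumes "varsys phi fr" and "is_signature phi Sg" and "J \<in> Jset phi Sg"
  shows "case J of
      Ctx G \<Rightarrow> distinct (OV G) \<and> (\<forall>k < length G. vars_ty (snd (G ! k)) \<subseteq> set (take k (OV G)))
    | IsType G A \<Rightarrow> vars_ty A \<subseteq> set (OV G) \<and> Ctx G \<in> Jset phi Sg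
    | HasType a A G \<Rightarrow> vars_tm a \<subseteq> set (OV G) \<and> Ctx G \<in> Jset phi Sg"
  using assms(3)
proof (induction rule: Jset.induct)
  case (R2 G A x)
  have "phi (ctxV G) \<subseteq> - ctxV G"
    using assms(1) finite_ctxV[of G] by (simp add: varsys_def)
  then have "x \<notin> set (OV G)"
    using \<open>x \<in> phi (ctxV G)\<close> set_OV_subset_ctxV[of G] by blast
  moreover have "vars_ty (snd ((G @ [(x, A)]) ! k)) \<subseteq> set (take k (OV (G @ [(x, A)])))"
    if "k < length (G @ [(x, A)])" for k
    using that R2.IH by (cases "k < length G") (auto simp: nth_append)
  ultimately show ?case
    using R2.IH by simp
next
  case (R4 S G "is" D as)
  have "vars_tm (as ! i) \<subseteq> set (OV D)" if "i \<in> set is" for i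
  proof -
    have "i < length G"
      using that R4.hyps(1) assms(2) by (auto simp: is_signature_def determining_def)
    then show ?thesis
      using R4.IH by simp
  qed
  then show ?case
    using R4.hyps by auto
next
  case (R5 f G "is" U D as)
  have "vars_tm (as ! i) \<subseteq> set (OV D)" if "i \<in> set is" for i
  proof -
    have "i < length G"
      using that R5.hyps(1) assms(2) by (auto simp: is_signature_def determining_def)
    then show ?thesis
      using R5.IH by simp
  qed
  then show ?case
    using R5.hyps by auto
qed auto

context
  fixes phi :: "'v set \<Rightarrow> 'v set" and fr :: "'v set \<Rightarrow> 'v" and Sg :: "('v, 'f, 't) sig"
  assumes varsys: "varsys phi fr" and signature: "is_signature phi Sg"
begin

lemma ctx_distinct: "Ctx G \<in> Jset phi Sg \<Longrightarrow> distinct (OV G)"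
  using Jset_wf[OF varsys signature] by fastforce

lemma ctx_vars_nth:
  "Ctx G \<in> Jset phi Sg \<Longrightarrow> k < length G \<Longrightarrow> vars_ty (snd (G ! k)) \<subseteq> set (take k (OV G))"
  using Jset_wf[OF varsys signature] by fastforce

lemma type_vars: "IsType G A \<in> Jset phi Sg \<Longrightarrow> vars_ty A \<subseteq> set (OV G)"
  using Jset_wf[OF varsys signature] by fastforce

lemma type_ctx: "IsType G A \<in> Jset phi Sg \<Longrightarrow> Ctx G \<in> Jset phi Sg"
  using Jset_wf[OF varsys signature] by fastforce

end

lemma ctx_snocI: "varsys phi fr \<Longrightarrow> Ctx G \<in> Jset phi Sg \<Longrightarrow> IsType G A \<in> Jset phi Sg \<Longrightarrow>
    Ctx (G @ [(fr (ctxV G), A)]) \<in> Jset phi Sg"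
  by (intro R2) (auto simp: varsys_def finite_ctxV)

lemma ctx_snocD: "Ctx (G @ [(x, A)]) \<in> Jset phi Sg \<Longrightarrow>
    Ctx G \<in> Jset phi Sg \<and> IsType G A \<in> Jset phi Sg \<and> x \<in> phi (ctxV G)"
  by (erule Jset.cases) auto

lemma ctx_snoc_fresh: "debruijn phi fr \<Longrightarrow> Ctx (G @ [(x, A)]) \<in> Jset phi Sg \<Longrightarrow> x = fr (ctxV G)"
  using ctx_snocD[of G x A phi Sg] finite_ctxV[of G] by (auto simp: debruijn_def)

lemma Jset_weaken:
  "J \<in> Jset phi Sg \<Longrightarrow> Ctx (G' @ [(y, B)]) \<in> Jset phi Sg \<Longrightarrow> case J of
      Ctx G \<Rightarrow> True
    | IsType G A \<Rightarrow> G = G' \<longrightarrow> IsType (G @ [(y, B)]) A \<in> Jset phi Sg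
    | HasType a A G \<Rightarrow> G = G' \<longrightarrow> HasType a A (G @ [(y, B)]) \<in> Jset phi Sg"
proof (induction rule: Jset.induct)
  case (R3 G i)
  then have "HasType (Var (fst ((G @ [(y, B)]) ! i))) (snd ((G @ [(y, B)]) ! i)) (G @ [(y, B)])
      \<in> Jset phi Sg" if "G = G'"
    using that by (intro Jset.R3) auto
  with R3 show ?case by (auto simp: nth_append)
next
  case (R4 S G "is" D as)
  then have "IsType (D @ [(y, B)]) (Ty S (map ((!) as) is)) \<in> Jset phi Sg" if "D = G'"
    using that by (intro Jset.R4[OF R4(1)]) auto
  then show ?case by simp
next
  case (R5 f G "is" U D as)
  then have "HasType (App f (map ((!) as) is)) (subst_ty (sub_of (OV G) as) U) (D @ [(y, B)])
      \<in> Jset phi Sg" if "D = G'"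
    using that by (intro Jset.R5[OF R5(1)]) auto
  then show ?case by simp
qed auto

lemma term_weaken: "HasType a A G \<in> Jset phi Sg \<Longrightarrow> Ctx (G @ [(y, B)]) \<in> Jset phi Sg \<Longrightarrow>
    HasType a A (G @ [(y, B)]) \<in> Jset phi Sg"
  using Jset_weaken[of "HasType a A G"] by fastforce

context
  fixes phi :: "'v set \<Rightarrow> 'v set" and fr :: "'v set \<Rightarrow> 'v" and Sg :: "('v, 'f, 't) sig"
  assumes varsys: "varsys phi fr" and signature: "is_signature phi Sg"
begin

lemma smor_args_subst:
  assumes "Ctx G \<in> Jset phi Sg" and "length bs = length G"
    and "\<forall>k < length G. HasType (subst_tm s (bs ! k))
      (subst_ty s (subst_ty (sub_of (take k (OV G)) (take k bs)) (snd (G ! k)))) D \<in> Jset phi Sg"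
  shows "\<forall>k < length G. HasType (map (subst_tm s) bs ! k)
      (subst_ty (sub_of (take k (OV G)) (take k (map (subst_tm s) bs))) (snd (G ! k))) D \<in> Jset phi Sg"
proof (intro HOL.allI HOL.impI)
  fix k assume k: "k < length G"
  then have "subst_ty s (subst_ty (sub_of (take k (OV G)) (take k bs)) (snd (G ! k))) =
      subst_ty (sub_of (take k (OV G)) (take k (map (subst_tm s) bs))) (snd (G ! k))"
    using subst_ty_sub_of[of "take k (OV G)" "take k bs" "snd (G ! k)" s]
      ctx_vars_nth[OF varsys signature assms(1) k] assms(2) by (simp add: take_map)
  with k assms(2,3) show "HasType (map (subst_tm s) bs ! k)
      (subst_ty (sub_of (take k (OV G)) (take k (map (subst_tm s) bs))) (snd (G ! k))) D \<in> Jset phi Sg"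
    by auto
qed

lemma Jset_subst:
  "J \<in> Jset phi Sg \<Longrightarrow> smor phi Sg D G' as \<Longrightarrow> case J of
      Ctx G \<Rightarrow> True
    | IsType G B \<Rightarrow> G = G' \<longrightarrow> IsType D (subst_ty (sub_of (OV G) as) B) \<in> Jset phi Sg
    | HasType b B G \<Rightarrow> G = G' \<longrightarrow>
        HasType (subst_tm (sub_of (OV G) as) b) (subst_ty (sub_of (OV G) as) B) D \<in> Jset phi Sg"
proof (induction rule: Jset.induct)
  case (R3 G i)
  show ?case
  proof (simp only: judg.case, intro HOL.impI)
    assume "G = G'"
    then have "distinct (OV G)" and "length as = length G"
      and "HasType (as ! i) (subst_ty (sub_of (take i (OV G)) (take i as)) (snd (G ! i))) D
        \<in> Jset phi Sg"
      using R3 ctx_distinct[OF varsys signature] by (auto simp: smor_def)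
    moreover have "subst_ty (sub_of (OV G) as) (snd (G ! i)) =
        subst_ty (sub_of (take i (OV G)) (take i as)) (snd (G ! i))"
      using ctx_vars_nth[OF varsys signature R3.hyps] sub_of_take[OF calculation(1), of as] calculation(2)
      by (intro subst_ty_cong) auto
    ultimately show "HasType (subst_tm (sub_of (OV G) as) (Var (fst (G ! i))))
        (subst_ty (sub_of (OV G) as) (snd (G ! i))) D \<in> Jset phi Sg"
      using R3.hyps sub_of_nth[of "OV G" as i] by simp
  qed
next
  case (R4 S G "is" D' bs)
  let ?s = "sub_of (OV G') as"
  have "\<forall>i \<in> set is. i < length bs"
    using R4.hyps signature by (auto simp: is_signature_def determining_def)
  then have args: "map (subst_tm ?s \<circ> (!) bs) is = map ((!) (map (subst_tm ?s) bs)) is"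
    by (intro map_cong) auto
  moreover have "IsType D (Ty S (map ((!) (map (subst_tm ?s) bs)) is)) \<in> Jset phi Sg" if "D' = G'"
    using R4 that by (intro Jset.R4 smor_args_subst) (auto simp: smor_def)
  ultimately show ?case by (simp add: args)
next
  case (R5 f G "is" U D' bs)
  let ?s = "sub_of (OV G') as"
  have "\<forall>i \<in> set is. i < length bs"
    using R5.hyps signature by (auto simp: is_signature_def determining_def)
  then have args: "map (subst_tm ?s \<circ> (!) bs) is = map ((!) (map (subst_tm ?s) bs)) is"
    by (intro map_cong) auto
  moreover have "vars_ty U \<subseteq> set (OV G)"
    using R5.hyps signature type_vars[OF varsys signature] by (auto simp: is_signature_def)
  then have "subst_ty ?s (subst_ty (sub_of (OV G) bs) U) = subst_ty (sub_of (OV G) (map (subst_tm ?s) bs)) U"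
    using R5.hyps by (simp add: subst_ty_sub_of)
  moreover have "HasType (App f (map ((!) (map (subst_tm ?s) bs)) is))
      (subst_ty (sub_of (OV G) (map (subst_tm ?s) bs)) U) D \<in> Jset phi Sg" if "D' = G'"
    using R5 that calculation(2) by (intro Jset.R5 smor_args_subst) (auto simp: smor_def)
  ultimately show ?case by (simp add: args)
qed auto

lemma type_subst: "IsType G B \<in> Jset phi Sg \<Longrightarrow> smor phi Sg D G as \<Longrightarrow>
    IsType D (subst_ty (sub_of (OV G) as) B) \<in> Jset phi Sg"
  using Jset_subst[of "IsType G B"] by fastforce

end

lemma smor_id: "Ctx G \<in> Jset phi Sg \<Longrightarrow> smor phi Sg G G (map Var (OV G))"
  unfolding smor_def by (auto simp: take_map simp del: map_map intro: Jset.R3)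

lemma smor_weaken: "smor phi Sg D G as \<Longrightarrow> Ctx (D @ [(y, B)]) \<in> Jset phi Sg \<Longrightarrow>
    smor phi Sg (D @ [(y, B)]) G as"
  unfolding smor_def by (auto intro: term_weaken)

lemma smor_prj: "Ctx (G @ [(y, B)]) \<in> Jset phi Sg \<Longrightarrow> smor phi Sg (G @ [(y, B)]) G (map Var (OV G))"
  using ctx_snocD[of G y B] by (blast intro: smor_weaken smor_id)

lemma smor_snoc:
  assumes "smor phi Sg D G as" and "Ctx (G @ [(x, A)]) \<in> Jset phi Sg"
    and "Ctx (D @ [(y, subst_ty (sub_of (OV G) as) A)]) \<in> Jset phi Sg"
  shows "smor phi Sg (D @ [(y, subst_ty (sub_of (OV G) as) A)]) (G @ [(x, A)]) (as @ [Var y])"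
proof -
  let ?D = "D @ [(y, subst_ty (sub_of (OV G) as) A)]"
  have "length as = length G"
    using assms(1) by (simp add: smor_def)
  moreover have "HasType (Var (fst (?D ! length D))) (snd (?D ! length D)) ?D \<in> Jset phi Sg"
    using assms(3) by (intro Jset.R3) auto
  moreover note smor_weaken[OF assms(1,3)]
  ultimately show ?thesis
    using assms(2,3) by (auto simp: smor_def nth_append less_Suc_eq)
qed

section \<open>Heyting prealgebras, cwf morphisms and hyperdoctrines\<close>

context
  fixes X le tp bt mt jn im
  assumes heyting: "is_heyting X le tp bt mt jn im"
begin

lemma heyting_refl: "x \<in> X \<Longrightarrow> le x x"
  using heyting by (simp add: is_heyting_def)

lemma heyting_trans: "x \<in> X \<Longrightarrow> y \<in> X \<Longrightarrow> z \<in> X \<Longrightarrow> le x y \<Longrightarrow> le y z \<Longrightarrow> le x z"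
  using heyting unfolding is_heyting_def by blast

lemma heyting_closed: "x \<in> X \<Longrightarrow> y \<in> X \<Longrightarrow> mt x y \<in> X \<and> jn x y \<in> X \<and> im x y \<in> X"
  using heyting unfolding is_heyting_def by blast

lemma heyting_top: "x \<in> X \<Longrightarrow> le x tp"
  using heyting by (simp add: is_heyting_def)

lemma heyting_bot: "x \<in> X \<Longrightarrow> le bt x"
  using heyting by (simp add: is_heyting_def)

lemma heyting_le_meet_iff: "x \<in> X \<Longrightarrow> y \<in> X \<Longrightarrow> z \<in> X \<Longrightarrow> le z (mt x y) \<longleftrightarrow> le z x \<and> le z y"
  using heyting unfolding is_heyting_def by blast

lemma heyting_join_le_iff: "x \<in> X \<Longrightarrow> y \<in> X \<Longrightarrow> z \<in> X \<Longrightarrow> le (jn x y) z \<longleftrightarrow> le x z \<and> le y z"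
  using heyting unfolding is_heyting_def by blast

lemma heyting_le_imp_iff: "x \<in> X \<Longrightarrow> y \<in> X \<Longrightarrow> z \<in> X \<Longrightarrow> le z (im x y) \<longleftrightarrow> le (mt z x) y"
  using heyting unfolding is_heyting_def by blast

lemma heyting_meet_le1: "x \<in> X \<Longrightarrow> y \<in> X \<Longrightarrow> le (mt x y) x"
  using heyting_le_meet_iff[of x y "mt x y"] heyting_refl heyting_closed by blast

lemma heyting_meet_le2: "x \<in> X \<Longrightarrow> y \<in> X \<Longrightarrow> le (mt x y) y"
  using heyting_le_meet_iff[of x y "mt x y"] heyting_refl heyting_closed by blast

lemma heyting_le_join1: "x \<in> X \<Longrightarrow> y \<in> X \<Longrightarrow> le x (jn x y)"
  using heyting_join_le_iff[of x y "jn x y"] heyting_refl heyting_closed by blast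

lemma heyting_le_join2: "x \<in> X \<Longrightarrow> y \<in> X \<Longrightarrow> le y (jn x y)"
  using heyting_join_le_iff[of x y "jn x y"] heyting_refl heyting_closed by blast

end

context
  fixes C :: "('o, 'm, 'ty, 'tm) cwf" and C' :: "('o2, 'm2, 'ty2, 'tm2) cwf"
    and Fo Fm sg th
  assumes cwf_mor: "is_cwf_mor C C' Fo Fm sg th"
begin

lemma cwf_mor_Ob: "X \<in> Ob C \<Longrightarrow> Fo X \<in> Ob C'"
  using cwf_mor by (simp add: is_cwf_mor_def)

lemma cwf_mor_Hom: "f \<in> Hom C X Y \<Longrightarrow> Fm f \<in> Hom C' (Fo X) (Fo Y)"
  using cwf_mor by (simp add: is_cwf_mor_def)

lemma cwf_mor_idm: "X \<in> Ob C \<Longrightarrow> Fm (idm C X) = idm C' (Fo X)"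
  using cwf_mor by (simp add: is_cwf_mor_def)

lemma cwf_mor_comp: "f \<in> Hom C X Y \<Longrightarrow> g \<in> Hom C Y Z \<Longrightarrow> Fm (comp C g f) = comp C' (Fm g) (Fm f)"
  using cwf_mor unfolding is_cwf_mor_def by metis

lemma cwf_mor_Tys: "X \<in> Ob C \<Longrightarrow> A \<in> Tys C X \<Longrightarrow> sg X A \<in> Tys C' (Fo X)"
  using cwf_mor by (simp add: is_cwf_mor_def)

lemma cwf_mor_tsub: "A \<in> Tys C Y \<Longrightarrow> f \<in> Hom C X Y \<Longrightarrow> sg X (tsub C A f) = tsub C' (sg Y A) (Fm f)"
  using cwf_mor unfolding is_cwf_mor_def by metis

lemma cwf_mor_ext: "X \<in> Ob C \<Longrightarrow> A \<in> Tys C X \<Longrightarrow>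
    Fo (ext C X A) = ext C' (Fo X) (sg X A) \<and> Fm (prj C X A) = prj C' (Fo X) (sg X A)"
  using cwf_mor by (simp add: is_cwf_mor_def)

lemma cwf_mor_vr: "X \<in> Ob C \<Longrightarrow> A \<in> Tys C X \<Longrightarrow>
    th (ext C X A) (tsub C A (prj C X A)) (vr C X A) = vr C' (Fo X) (sg X A)"
  using cwf_mor by (simp add: is_cwf_mor_def)

lemma cwf_mor_pair: "A \<in> Tys C Y \<Longrightarrow> f \<in> Hom C X Y \<Longrightarrow> a \<in> Tms C X (tsub C A f) \<Longrightarrow>
    Fm (pair C Y A f a) = pair C' (Fo Y) (sg Y A) (Fm f) (th X (tsub C A f) a)"
  using cwf_mor unfolding is_cwf_mor_def by metis

end

context
  fixes C :: "('o, 'm, 'ty, 'tm) cwf" and H :: "('o, 'm, 'ty, 'pr) hdoc"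
  assumes hdoc: "is_hdoc C H"
begin

lemma hdoc_heyting: "X \<in> Ob C \<Longrightarrow> heyting_at H X"
  using hdoc by (simp add: is_hdoc_def)

lemma hdoc_psub_heyting_mor: "f \<in> Hom C X Y \<Longrightarrow>
    is_heyting_mor (Pr H Y) (ple H Y) (ptop H Y) (pbot H Y) (pmeet H Y) (pjoin H Y) (pimp H Y)
      (Pr H X) (ple H X) (ptop H X) (pbot H X) (pmeet H X) (pjoin H X) (pimp H X) (psub H f)"
  using hdoc by (simp add: is_hdoc_def)

lemma hdoc_psub_idm: "X \<in> Ob C \<Longrightarrow> R \<in> Pr H X \<Longrightarrow> psub H (idm C X) R = R"
  using hdoc by (simp add: is_hdoc_def)

lemma hdoc_psub_comp: "f \<in> Hom C X Y \<Longrightarrow> g \<in> Hom C Y Z \<Longrightarrow> R \<in> Pr H Z \<Longrightarrow>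
    psub H (comp C g f) R = psub H f (psub H g R)"
  using hdoc unfolding is_hdoc_def by blast

lemma hdoc_quant_closed: "X \<in> Ob C \<Longrightarrow> S \<in> Tys C X \<Longrightarrow> R \<in> Pr H (ext C X S) \<Longrightarrow>
    pall H X S R \<in> Pr H X \<and> pex H X S R \<in> Pr H X"
  using hdoc unfolding is_hdoc_def by blast

lemma hdoc_all_adj: "X \<in> Ob C \<Longrightarrow> S \<in> Tys C X \<Longrightarrow> Q \<in> Pr H X \<Longrightarrow> R \<in> Pr H (ext C X S) \<Longrightarrow>
    ple H X Q (pall H X S R) \<longleftrightarrow> ple H (ext C X S) (psub H (prj C X S) Q) R"
  using hdoc unfolding is_hdoc_def by blast

lemma hdoc_ex_adj: "X \<in> Ob C \<Longrightarrow> S \<in> Tys C X \<Longrightarrow> Q \<in> Pr H X \<Longrightarrow> R \<in> Pr H (ext C X S) \<Longrightarrow>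
    ple H X (pex H X S R) Q \<longleftrightarrow> ple H (ext C X S) R (psub H (prj C X S) Q)"
  using hdoc unfolding is_hdoc_def by blast

lemma hdoc_beck_chevalley: "S \<in> Tys C Y \<Longrightarrow> f \<in> Hom C X Y \<Longrightarrow> R \<in> Pr H (ext C Y S) \<Longrightarrow>
    psub H f (pall H Y S R) = pall H X (tsub C S f) (psub H (qmor C X Y f S) R) \<and>
    psub H f (pex H Y S R) = pex H X (tsub C S f) (psub H (qmor C X Y f S) R)"
  using hdoc unfolding is_hdoc_def by blast

end

context
  fixes C :: "('o, 'm, 'ty, 'tm) cwf" and H :: "('o, 'm, 'ty, 'pr) hdoc"
    and C' :: "('o2, 'm2, 'ty2, 'tm2) cwf" and H' :: "('o2, 'm2, 'ty2, 'pr2) hdoc"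
    and Fo Fm sg G
  assumes Fbased: "is_Fbased_mor C H C' H' Fo Fm sg G"
begin

lemma Fbased_heyting_mor: "X \<in> Ob C \<Longrightarrow>
    is_heyting_mor (Pr H X) (ple H X) (ptop H X) (pbot H X) (pmeet H X) (pjoin H X) (pimp H X)
      (Pr H' (Fo X)) (ple H' (Fo X)) (ptop H' (Fo X)) (pbot H' (Fo X)) (pmeet H' (Fo X))
      (pjoin H' (Fo X)) (pimp H' (Fo X)) (G X)"
  using Fbased by (simp add: is_Fbased_mor_def)

lemma Fbased_psub: "f \<in> Hom C X Y \<Longrightarrow> R \<in> Pr H Y \<Longrightarrow> G X (psub H f R) = psub H' (Fm f) (G Y R)"
  using Fbased by (simp add: is_Fbased_mor_def)

lemma Fbased_quant: "X \<in> Ob C \<Longrightarrow> S \<in> Tys C X \<Longrightarrow> R \<in> Pr H (ext C X S) \<Longrightarrow>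
    G X (pall H X S R) = pall H' (Fo X) (sg X S) (G (ext C X S) R) \<and>
    G X (pex H X S R) = pex H' (Fo X) (sg X S) (G (ext C X S) R)"
  using Fbased by (simp add: is_Fbased_mor_def)

end

section \<open>Interpretation of formulas in a hyperdoctrine\<close>

lemma Form_ctx: "(G, a) \<in> Form phi Sg Ps \<Longrightarrow> Ctx G \<in> Jset phi Sg"
  by (induction rule: Form.induct) (auto simp: smor_def dest: ctx_snocD)

lemma pred_standard_args:
  "pred_standard Ps \<Longrightarrow> Ps R = Some (G, is) \<Longrightarrow> length as = length G \<Longrightarrow> map ((!) as) is = as"
proof -
  assume "pred_standard Ps" "Ps R = Some (G, is)" "length as = length G"
  then have "is = [0..<length as]"
    by (simp add: pred_standard_def)
  then show ?thesis
    by (simp add: map_nth)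
qed

inductive_simps Form_Conj_iff: "(G, Conj a b) \<in> Form phi Sg Ps"
inductive_simps Form_Disj_iff: "(G, Disj a b) \<in> Form phi Sg Ps"
inductive_simps Form_Imp_iff: "(G, Imp a b) \<in> Form phi Sg Ps"
inductive_simps Form_All_iff: "(G, All x A a) \<in> Form phi Sg Ps"
inductive_simps Form_Ex_iff: "(G, Ex x A a) \<in> Form phi Sg Ps"

lemma Thm_is_seq: "s \<in> Thm phi fr Sg Ps T \<Longrightarrow> is_seq phi Sg Ps s"
  by (induction rule: Thm.induct) auto

text \<open>\<open>fst (the (Ps R))\<close> is the declared context \<open>\<Gamma>\<^sub>R\<close>: an atom over \<open>\<Gamma>\<close> is the instance
  \<open>R(OV \<Gamma>\<^sub>R){(\<Gamma>, \<Gamma>\<^sub>R, ts)}\<close>, so \<open>R\<^sup>*\<close> is reindexed along \<open>F\<close> of that substitution.\<close>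

primrec interp :: "('v, 'f, 't, 'p) psig \<Rightarrow> (('v, 'f, 't) ctx \<Rightarrow> 'o) \<Rightarrow> (('v, 'f, 't) smorph \<Rightarrow> 'm) \<Rightarrow>
    (('v, 'f, 't) ctx \<Rightarrow> ('v, 'f, 't) ctx \<times> ('v, 'f, 't) pty \<Rightarrow> 'ty) \<Rightarrow> ('o, 'm, 'ty, 'pr) hdoc \<Rightarrow>
    ('p \<Rightarrow> 'pr) \<Rightarrow> ('v, 'f, 't) ctx \<Rightarrow> ('v, 'f, 't, 'p) form \<Rightarrow> 'pr" where
  "interp Ps Fo Fm sg D Rstar G (Pred R ts) = psub D (Fm (G, fst (the (Ps R)), ts)) (Rstar R)"
| "interp Ps Fo Fm sg D Rstar G FBot = pbot D (Fo G)"
| "interp Ps Fo Fm sg D Rstar G FTop = ptop D (Fo G)"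
| "interp Ps Fo Fm sg D Rstar G (Conj a b) =
     pmeet D (Fo G) (interp Ps Fo Fm sg D Rstar G a) (interp Ps Fo Fm sg D Rstar G b)"
| "interp Ps Fo Fm sg D Rstar G (Disj a b) =
     pjoin D (Fo G) (interp Ps Fo Fm sg D Rstar G a) (interp Ps Fo Fm sg D Rstar G b)"
| "interp Ps Fo Fm sg D Rstar G (Imp a b) =
     pimp D (Fo G) (interp Ps Fo Fm sg D Rstar G a) (interp Ps Fo Fm sg D Rstar G b)"
| "interp Ps Fo Fm sg D Rstar G (All x A a) =
     pall D (Fo G) (sg G (G, A)) (interp Ps Fo Fm sg D Rstar (G @ [(x, A)]) a)"
| "interp Ps Fo Fm sg D Rstar G (Ex x A a) =
     pex D (Fo G) (sg G (G, A)) (interp Ps Fo Fm sg D Rstar (G @ [(x, A)]) a)"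

locale LT_initiality =
  fixes phi :: "'v set \<Rightarrow> 'v set" and fr :: "'v set \<Rightarrow> 'v"
    and Sg :: "('v, 'f, 't) sig"
    and Ps :: "('v, 'f, 't, 'p) psig"
    and C :: "('o, 'm, 'ty, 'tm) cwf"
    and Fo :: "('v, 'f, 't) ctx \<Rightarrow> 'o"
    and Fm :: "('v, 'f, 't) smorph \<Rightarrow> 'm"
    and sg :: "('v, 'f, 't) ctx \<Rightarrow> ('v, 'f, 't) ctx \<times> ('v, 'f, 't) pty \<Rightarrow> 'ty"
    and th :: "('v, 'f, 't) ctx \<Rightarrow> ('v, 'f, 't) ctx \<times> ('v, 'f, 't) pty \<Rightarrow>
               (('v, 'f, 't) ctx \<times> ('v, 'f, 't) pty) \<times> ('v, 'f) ptm \<Rightarrow> 'tm"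
    and D :: "('o, 'm, 'ty, 'pr) hdoc"
    and Rstar :: "'p \<Rightarrow> 'pr"
  assumes varsys: "varsys phi fr" and debruijn: "debruijn phi fr"
    and signature: "is_signature phi Sg"
    and cwf_mor: "is_cwf_mor (FSig phi fr Sg) C Fo Fm sg th"
    and pred_sig: "is_pred_sig phi Sg Ps" and pred_standard: "pred_standard Ps"
    and hdoc: "is_hdoc C D"
    and Rstar_Pr: "\<forall>R G is. Ps R = Some (G, is) \<longrightarrow> Rstar R \<in> Pr D (Fo G)"
begin

abbreviation "FS \<equiv> FSig phi fr Sg"
abbreviation "J \<equiv> Jset phi Sg"
abbreviation "LTH \<equiv> LT phi fr Sg Ps {}"
abbreviation "I \<equiv> interp Ps Fo Fm sg D Rstar"

lemma Fo_Ob: "Ctx X \<in> J \<Longrightarrow> Fo X \<in> Ob C"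
  using cwf_mor_Ob[OF cwf_mor] by (simp add: FSig_def)

lemma Fm_Hom: "smor phi Sg X Y as \<Longrightarrow> Fm (X, Y, as) \<in> Hom C (Fo X) (Fo Y)"
  using cwf_mor_Hom[OF cwf_mor] by (simp add: FSig_def)

lemma Fm_comp: "smor phi Sg X Y as \<Longrightarrow> smor phi Sg Y Z bs \<Longrightarrow>
    Fm (X, Z, map (subst_tm (sub_of (OV Y) as)) bs) = comp C (Fm (Y, Z, bs)) (Fm (X, Y, as))"
  using cwf_mor_comp[OF cwf_mor, of "(X, Y, as)" X Y "(Y, Z, bs)" Z] by (simp add: FSig_def)

lemma Fm_idm: "Ctx X \<in> J \<Longrightarrow> Fm (X, X, map Var (OV X)) = idm C (Fo X)"
  using cwf_mor_idm[OF cwf_mor, of X] by (simp add: FSig_def)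

lemma sg_Tys: "IsType X A \<in> J \<Longrightarrow> sg X (X, A) \<in> Tys C (Fo X)"
  using cwf_mor_Tys[OF cwf_mor, of X "(X, A)"] type_ctx[OF varsys signature] by (simp add: FSig_def)

lemma sg_subst: "IsType Y A \<in> J \<Longrightarrow> smor phi Sg X Y as \<Longrightarrow>
    sg X (X, subst_ty (sub_of (OV Y) as) A) = tsub C (sg Y (Y, A)) (Fm (X, Y, as))"
  using cwf_mor_tsub[OF cwf_mor, of "(Y, A)" Y "(X, Y, as)" X] by (simp add: FSig_def)

lemma Fo_ext: "IsType X A \<in> J \<Longrightarrow> Fo (X @ [(fr (ctxV X), A)]) = ext C (Fo X) (sg X (X, A))"
  using cwf_mor_ext[OF cwf_mor, of X "(X, A)"] type_ctx[OF varsys signature] by (simp add: FSig_def)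

lemma Fm_prj: "IsType X A \<in> J \<Longrightarrow>
    Fm (X @ [(fr (ctxV X), A)], X, map Var (OV X)) = prj C (Fo X) (sg X (X, A))"
  using cwf_mor_ext[OF cwf_mor, of X "(X, A)"] type_ctx[OF varsys signature] by (simp add: FSig_def)

lemma th_vr: "IsType X A \<in> J \<Longrightarrow>
    th (X @ [(fr (ctxV X), A)]) (X @ [(fr (ctxV X), A)], A) ((X @ [(fr (ctxV X), A)], A), Var (fr (ctxV X)))
      = vr C (Fo X) (sg X (X, A))"
  using cwf_mor_vr[OF cwf_mor, of X "(X, A)"] type_ctx[OF varsys signature]
  by (simp add: FSig_def del: map_map)

lemma Fm_pair: "IsType Y A \<in> J \<Longrightarrow> smor phi Sg X Y as \<Longrightarrow>
    HasType b (subst_ty (sub_of (OV Y) as) A) X \<in> J \<Longrightarrow>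
    Fm (X, Y @ [(fr (ctxV Y), A)], as @ [b]) =
      pair C (Fo Y) (sg Y (Y, A)) (Fm (X, Y, as))
        (th X (X, subst_ty (sub_of (OV Y) as) A) ((X, subst_ty (sub_of (OV Y) as) A), b))"
  using cwf_mor_pair[OF cwf_mor, of "(Y, A)" Y "(X, Y, as)" X "((X, subst_ty (sub_of (OV Y) as) A), b)"]
  by (simp add: FSig_def)

lemma Fo_snoc: "Ctx (G @ [(x, A)]) \<in> J \<Longrightarrow> Fo (G @ [(x, A)]) = ext C (Fo G) (sg G (G, A))"
  using ctx_snoc_fresh[OF debruijn] ctx_snocD Fo_ext by metis

lemma Fm_snoc_prj: "Ctx (G @ [(x, A)]) \<in> J \<Longrightarrow>
    Fm (G @ [(x, A)], G, map Var (OV G)) = prj C (Fo G) (sg G (G, A))"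
  using ctx_snoc_fresh[OF debruijn] ctx_snocD Fm_prj by metis

lemma Fm_snoc_qmor:
  assumes A: "IsType G A \<in> J" and as: "smor phi Sg D' G as"
  defines "A' \<equiv> subst_ty (sub_of (OV G) as) A" and "y \<equiv> fr (ctxV D')"
  shows "Fm (D' @ [(y, A')], G @ [(fr (ctxV G), A)], as @ [Var y]) =
    qmor C (Fo D') (Fo G) (Fm (D', G, as)) (sg G (G, A))"
proof -
  let ?E = "D' @ [(y, A')]"
  have A': "IsType D' A' \<in> J"
    unfolding A'_def using type_subst[OF varsys signature A as] .
  have E: "Ctx ?E \<in> J"
    unfolding y_def using ctx_snocI[OF varsys _ A'] as by (simp add: smor_def)
  have "HasType (Var (fst (?E ! length D'))) (snd (?E ! length D')) ?E \<in> J"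
    using E by (intro Jset.R3) auto
  then have "Fm (?E, G @ [(fr (ctxV G), A)], as @ [Var y]) =
      pair C (Fo G) (sg G (G, A)) (Fm (?E, G, as)) (th ?E (?E, A') ((?E, A'), Var y))"
    using Fm_pair[OF A smor_weaken[OF as E]] by (simp add: A'_def)
  also have "Fm (?E, G, as) = comp C (Fm (D', G, as)) (prj C (Fo D') (tsub C (sg G (G, A)) (Fm (D', G, as))))"
    using Fm_comp[OF smor_prj[OF E] as] Fm_prj[OF A'] sg_subst[OF A as]
    by (simp add: A'_def y_def)
  also have "th ?E (?E, A') ((?E, A'), Var y) = vr C (Fo D') (tsub C (sg G (G, A)) (Fm (D', G, as)))"
    using th_vr[OF A'] sg_subst[OF A as] by (simp add: A'_def y_def)
  finally show ?thesis
    by (simp add: qmor_def)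
qed

lemma Form_heyting_at: "(G, a) \<in> Form phi Sg Ps \<Longrightarrow> heyting_at D (Fo G)"
  using hdoc_heyting[OF hdoc Fo_Ob[OF Form_ctx]] .

lemma interp_in_Pr: "(G, a) \<in> Form phi Sg Ps \<Longrightarrow> I G a \<in> Pr D (Fo G)"
proof (induction rule: Form.induct)
  case (atom R GR "is" G as)
  then have "Rstar R \<in> Pr D (Fo GR)" and "map ((!) as) is = as"
    using Rstar_Pr pred_standard_args[OF pred_standard] by (auto simp: smor_def)
  with atom show ?case
    using hdoc_psub_heyting_mor[OF hdoc Fm_Hom[OF atom(2)]] by (simp add: is_heyting_mor_def)
next
  case (bot G)
  then show ?case using hdoc_heyting[OF hdoc Fo_Ob[OF bot]] by (simp add: is_heyting_def)
next
  case (top G)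
  then show ?case using hdoc_heyting[OF hdoc Fo_Ob[OF top]] by (simp add: is_heyting_def)
next
  case (conj G a b)
  then show ?case using Form_heyting_at[OF conj.hyps(1)] by (simp add: is_heyting_def)
next
  case (disj G a b)
  then show ?case using Form_heyting_at[OF disj.hyps(1)] by (simp add: is_heyting_def)
next
  case (imp G a b)
  then show ?case using Form_heyting_at[OF imp.hyps(1)] by (simp add: is_heyting_def)
next
  case (all G x A a)
  then show ?case
    using hdoc_quant_closed[OF hdoc Fo_Ob[OF type_ctx[OF varsys signature]] sg_Tys, OF all.hyps(2,2)]
      Fo_snoc[OF Form_ctx[OF all.hyps(1)]] by simp
next
  case (ex G x A a)
  then show ?case
    using hdoc_quant_closed[OF hdoc Fo_Ob[OF type_ctx[OF varsys signature]] sg_Tys, OF ex.hyps(2,2)]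
      Fo_snoc[OF Form_ctx[OF ex.hyps(1)]] by simp
qed

lemma interp_fsub_body:
  assumes body: "(G @ [(x, A)], a) \<in> Form phi Sg Ps" and A: "IsType G A \<in> J"
    and IH: "\<And>E bs. smor phi Sg E (G @ [(x, A)]) bs \<Longrightarrow>
      I E (fsub fr E (G @ [(x, A)]) bs a) = psub D (Fm (E, G @ [(x, A)], bs)) (I (G @ [(x, A)]) a)"
    and as: "smor phi Sg D' G as"
  defines "A' \<equiv> subst_ty (sub_of (OV G) as) A" and "y \<equiv> fr (ctxV D')"
  shows "I (D' @ [(y, A')]) (fsub fr (D' @ [(y, A')]) (G @ [(x, A)]) (as @ [Var y]) a) =
    psub D (qmor C (Fo D') (Fo G) (Fm (D', G, as)) (sg G (G, A))) (I (G @ [(x, A)]) a)"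
proof -
  have snoc: "Ctx (G @ [(x, A)]) \<in> J" and x: "x = fr (ctxV G)"
    using Form_ctx[OF body] ctx_snoc_fresh[OF debruijn] by auto
  have "Ctx (D' @ [(y, A')]) \<in> J"
    unfolding y_def A'_def using as type_subst[OF varsys signature A as]
    by (intro ctx_snocI[OF varsys]) (auto simp: smor_def)
  then have "smor phi Sg (D' @ [(y, A')]) (G @ [(x, A)]) (as @ [Var y])"
    unfolding A'_def by (intro smor_snoc[OF as snoc])
  with IH show ?thesis
    using Fm_snoc_qmor[OF A as] x by (simp add: A'_def y_def)
qed

lemma interp_fsub:
  "(G, a) \<in> Form phi Sg Ps \<Longrightarrow> smor phi Sg D' G as \<Longrightarrow>
    I D' (fsub fr D' G as a) = psub D (Fm (D', G, as)) (I G a)"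
proof (induction arbitrary: D' as rule: Form.induct)
  case (atom R GR "is" G bs)
  have "map ((!) bs) is = bs" and R: "Rstar R \<in> Pr D (Fo GR)"
    using atom pred_standard_args[OF pred_standard] Rstar_Pr by (auto simp: smor_def)
  moreover have "psub D (Fm (D', GR, map (subst_tm (sub_of (OV G) as)) bs)) (Rstar R) =
      psub D (Fm (D', G, as)) (psub D (Fm (G, GR, bs)) (Rstar R))"
    using Fm_comp[OF atom(3,2)] hdoc_psub_comp[OF hdoc Fm_Hom[OF atom(3)] Fm_Hom[OF atom(2)] R]
    by simp
  ultimately show ?case
    using atom(1) by simp
next
  case (all G x A a)
  then show ?case
    using interp_fsub_body[OF all.hyps all.IH all.prems] interp_in_Pr[OF all.hyps(1)]
      Fo_snoc[OF Form_ctx[OF all.hyps(1)]] sg_subst[OF all.hyps(2) all.prems]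
      hdoc_beck_chevalley[OF hdoc sg_Tys[OF all.hyps(2)] Fm_Hom[OF all.prems]]
      ctx_snoc_fresh[OF debruijn Form_ctx[OF all.hyps(1)]]
    by (simp add: Let_def)
next
  case (ex G x A a)
  then show ?case
    using interp_fsub_body[OF ex.hyps ex.IH ex.prems] interp_in_Pr[OF ex.hyps(1)]
      Fo_snoc[OF Form_ctx[OF ex.hyps(1)]] sg_subst[OF ex.hyps(2) ex.prems]
      hdoc_beck_chevalley[OF hdoc sg_Tys[OF ex.hyps(2)] Fm_Hom[OF ex.prems]]
      ctx_snoc_fresh[OF debruijn Form_ctx[OF ex.hyps(1)]]
    by (simp add: Let_def)
qed (use hdoc_psub_heyting_mor[OF hdoc Fm_Hom] interp_in_Pr in \<open>auto simp: is_heyting_mor_def\<close>)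

lemma interp_wk: "(G, a) \<in> Form phi Sg Ps \<Longrightarrow> Ctx (G @ [(x, A)]) \<in> J \<Longrightarrow>
    I (G @ [(x, A)]) (wk fr G x A a) = psub D (prj C (Fo G) (sg G (G, A))) (I G a)"
  using interp_fsub[OF _ smor_prj] Fm_snoc_prj by simp

lemma interp_all_adj:
  assumes a: "(G, a) \<in> Form phi Sg Ps" and b: "(G, All x A b) \<in> Form phi Sg Ps"
  shows "ple D (Fo G) (I G a) (I G (All x A b)) \<longleftrightarrow>
    ple D (Fo (G @ [(x, A)])) (I (G @ [(x, A)]) (wk fr G x A a)) (I (G @ [(x, A)]) b)"
proof -
  have body: "(G @ [(x, A)], b) \<in> Form phi Sg Ps" and A: "IsType G A \<in> J"
    using b by (simp_all add: Form_All_iff)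
  show ?thesis
    using hdoc_all_adj[OF hdoc Fo_Ob[OF type_ctx[OF varsys signature A]] sg_Tys[OF A] interp_in_Pr[OF a]]
      interp_in_Pr[OF body] Fo_snoc[OF Form_ctx[OF body]] interp_wk[OF a Form_ctx[OF body]]
    by simp
qed

lemma interp_ex_adj:
  assumes a: "(G, a) \<in> Form phi Sg Ps" and b: "(G, Ex x A b) \<in> Form phi Sg Ps"
  shows "ple D (Fo G) (I G (Ex x A b)) (I G a) \<longleftrightarrow>
    ple D (Fo (G @ [(x, A)])) (I (G @ [(x, A)]) b) (I (G @ [(x, A)]) (wk fr G x A a))"
proof -
  have body: "(G @ [(x, A)], b) \<in> Form phi Sg Ps" and A: "IsType G A \<in> J"
    using b by (simp_all add: Form_Ex_iff)
  show ?thesis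
    using hdoc_ex_adj[OF hdoc Fo_Ob[OF type_ctx[OF varsys signature A]] sg_Tys[OF A] interp_in_Pr[OF a]]
      interp_in_Pr[OF body] Fo_snoc[OF Form_ctx[OF body]] interp_wk[OF a Form_ctx[OF body]]
    by simp
qed

lemma interp_sound: "(G, a, b) \<in> Thm phi fr Sg Ps {} \<Longrightarrow> ple D (Fo G) (I G a) (I G b)"
proof (induction G a b rule: Thm.induct[split_format (complete)])
  case (ax G a b)
  then show ?case by simp
next
  case (idt G a)
  then have "(G, a) \<in> Form phi Sg Ps"
    by (simp add: is_seq_def)
  then show ?case
    using heyting_refl[OF Form_heyting_at interp_in_Pr] by simp
next
  case (cut G a b c)
  have a: "(G, a) \<in> Form phi Sg Ps" and b: "(G, b) \<in> Form phi Sg Ps" and c: "(G, c) \<in> Form phi Sg Ps"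
    using Thm_is_seq[OF cut.hyps(1)] cut.hyps(3) by (simp_all add: is_seq_def)
  show ?case
    using heyting_trans[OF Form_heyting_at[OF a] interp_in_Pr[OF a] interp_in_Pr[OF b] interp_in_Pr[OF c] cut.IH] .
next
  case (conjE1 G a b)
  then have "(G, a) \<in> Form phi Sg Ps" "(G, b) \<in> Form phi Sg Ps"
    by (simp_all add: is_seq_def Form_Conj_iff)
  then show ?case
    using heyting_meet_le1[OF Form_heyting_at interp_in_Pr interp_in_Pr] by simp
next
  case (conjE2 G a b)
  then have "(G, a) \<in> Form phi Sg Ps" "(G, b) \<in> Form phi Sg Ps"
    by (simp_all add: is_seq_def Form_Conj_iff)
  then show ?case
    using heyting_meet_le2[OF Form_heyting_at interp_in_Pr interp_in_Pr] by simp
next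
  case (conjI G c a b)
  then have "(G, a) \<in> Form phi Sg Ps" "(G, b) \<in> Form phi Sg Ps" "(G, c) \<in> Form phi Sg Ps"
    by (simp_all add: is_seq_def Form_Conj_iff)
  with conjI.IH show ?case
    using heyting_le_meet_iff[OF Form_heyting_at interp_in_Pr interp_in_Pr interp_in_Pr] by simp
next
  case (topI G c)
  then have "(G, c) \<in> Form phi Sg Ps"
    by (simp add: is_seq_def)
  then show ?case
    using heyting_top[OF Form_heyting_at interp_in_Pr] by simp
next
  case (disjI1 G a b)
  then have "(G, a) \<in> Form phi Sg Ps" "(G, b) \<in> Form phi Sg Ps"
    by (simp_all add: is_seq_def Form_Disj_iff)
  then show ?case
    using heyting_le_join1[OF Form_heyting_at interp_in_Pr interp_in_Pr] by simp
next
  case (disjI2 G b a)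
  then have "(G, a) \<in> Form phi Sg Ps" "(G, b) \<in> Form phi Sg Ps"
    by (simp_all add: is_seq_def Form_Disj_iff)
  then show ?case
    using heyting_le_join2[OF Form_heyting_at interp_in_Pr interp_in_Pr] by simp
next
  case (disjE G a c b)
  then have "(G, a) \<in> Form phi Sg Ps" "(G, b) \<in> Form phi Sg Ps" "(G, c) \<in> Form phi Sg Ps"
    by (simp_all add: is_seq_def Form_Disj_iff)
  with disjE.IH show ?case
    using heyting_join_le_iff[OF Form_heyting_at interp_in_Pr interp_in_Pr interp_in_Pr] by simp
next
  case (botE G c)
  then have "(G, c) \<in> Form phi Sg Ps"
    by (simp add: is_seq_def)
  then show ?case
    using heyting_bot[OF Form_heyting_at interp_in_Pr] by simp
next
  case (impI G a b c)
  then have "(G, a) \<in> Form phi Sg Ps" "(G, b) \<in> Form phi Sg Ps" "(G, c) \<in> Form phi Sg Ps"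
    by (simp_all add: is_seq_def Form_Imp_iff)
  with impI.IH show ?case
    using heyting_le_imp_iff[OF Form_heyting_at interp_in_Pr interp_in_Pr interp_in_Pr] by simp
next
  case (impE G a b c)
  have "(G, a) \<in> Form phi Sg Ps" "(G, b) \<in> Form phi Sg Ps" "(G, c) \<in> Form phi Sg Ps"
    using Thm_is_seq[OF impE.hyps(1)] by (simp_all add: is_seq_def Form_Imp_iff)
  with impE.IH show ?case
    using heyting_le_imp_iff[OF Form_heyting_at interp_in_Pr interp_in_Pr interp_in_Pr] by simp
next
  case (allI G x A a b)
  then show ?case
    using interp_all_adj by (simp add: is_seq_def)
next
  case (allE G a x A b)
  have "(G, a) \<in> Form phi Sg Ps" and "(G, All x A b) \<in> Form phi Sg Ps"
    using Thm_is_seq[OF allE.hyps(1)] by (simp_all add: is_seq_def)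
  with allE.IH show ?case
    using interp_all_adj by simp
next
  case (exE G x A b a)
  then show ?case
    using interp_ex_adj by (simp add: is_seq_def)
next
  case (exI G x A b a)
  have "(G, a) \<in> Form phi Sg Ps" and "(G, Ex x A b) \<in> Form phi Sg Ps"
    using Thm_is_seq[OF exI.hyps(1)] by (simp_all add: is_seq_def)
  with exI.IH show ?case
    using interp_ex_adj by simp
next
  case (subst G a b D' as)
  have "(G, a) \<in> Form phi Sg Ps" "(G, b) \<in> Form phi Sg Ps"
    using Thm_is_seq[OF subst.hyps(1)] by (simp_all add: is_seq_def)
  with subst show ?case
    using interp_fsub interp_in_Pr hdoc_psub_heyting_mor[OF hdoc Fm_Hom[OF subst.hyps(2)]]
    by (simp add: is_heyting_mor_def)
qed

lemma LT_Pr_iff: "p \<in> Pr LTH X \<longleftrightarrow> (\<exists>a. p = (X, a) \<and> (X, a) \<in> Form phi Sg Ps)"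
  by (auto simp: LT_def)

lemma interp_Fbased_mor: "is_Fbased_mor FS LTH C D Fo Fm sg (\<lambda>X p. I X (snd p))"
  unfolding is_Fbased_mor_def
proof (intro HOL.conjI ballI HOL.allI HOL.impI)
  fix X assume "X \<in> Ob FS"
  show "is_heyting_mor (Pr LTH X) (ple LTH X) (ptop LTH X) (pbot LTH X) (pmeet LTH X) (pjoin LTH X)
      (pimp LTH X) (Pr D (Fo X)) (ple D (Fo X)) (ptop D (Fo X)) (pbot D (Fo X)) (pmeet D (Fo X))
      (pjoin D (Fo X)) (pimp D (Fo X)) (\<lambda>p. I X (snd p))"
    unfolding is_heyting_mor_def
    by (auto simp: LT_Pr_iff interp_in_Pr) (auto simp: LT_def interp_sound)
next
  fix X Y f R assume "f \<in> Hom FS X Y" and "R \<in> Pr LTH Y"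
  then show "I X (snd (psub LTH f R)) = psub D (Fm f) (I Y (snd R))"
    by (auto simp: FSig_def LT_def interp_fsub)
next
  fix X S R assume "S \<in> Tys FS X" and "R \<in> Pr LTH (ext FS X S)"
  then show "I X (snd (pall LTH X S R)) = pall D (Fo X) (sg X S) (I (ext FS X S) (snd R))"
    and "I X (snd (pex LTH X S R)) = pex D (Fo X) (sg X S) (I (ext FS X S) (snd R))"
    by (auto simp: LT_def FSig_def)
qed

lemma interp_Pred_OV: "Ps R = Some (GR, is) \<Longrightarrow> I GR (Pred R (map Var (OV GR))) = Rstar R"
proof -
  assume R: "Ps R = Some (GR, is)"
  then have "Ctx GR \<in> J" and "Rstar R \<in> Pr D (Fo GR)"
    using pred_sig Rstar_Pr by (auto simp: is_pred_sig_def)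
  with R show ?thesis
    using Fm_idm hdoc_psub_idm[OF hdoc Fo_Ob] by simp
qed

lemma Fbased_LT_connectives:
  assumes G': "is_Fbased_mor FS LTH C D Fo Fm sg G'"
    and a: "(X, a) \<in> Form phi Sg Ps" and b: "(X, b) \<in> Form phi Sg Ps"
  shows "G' X (X, Conj a b) = pmeet D (Fo X) (G' X (X, a)) (G' X (X, b)) \<and>
    G' X (X, Disj a b) = pjoin D (Fo X) (G' X (X, a)) (G' X (X, b)) \<and>
    G' X (X, Imp a b) = pimp D (Fo X) (G' X (X, a)) (G' X (X, b))"
  using Fbased_heyting_mor[OF G', of X] Form_ctx[OF a] a b
  by (simp add: FSig_def LT_def is_heyting_mor_def)

lemma Fbased_LT_quantifiers:
  assumes G': "is_Fbased_mor FS LTH C D Fo Fm sg G'"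
    and a: "(X @ [(x, A)], a) \<in> Form phi Sg Ps" and A: "IsType X A \<in> J"
  shows "G' X (X, All x A a) = pall D (Fo X) (sg X (X, A)) (G' (X @ [(x, A)]) (X @ [(x, A)], a)) \<and>
    G' X (X, Ex x A a) = pex D (Fo X) (sg X (X, A)) (G' (X @ [(x, A)]) (X @ [(x, A)], a))"
proof -
  have "x = fr (ctxV X)"
    using ctx_snoc_fresh[OF debruijn Form_ctx[OF a]] .
  then show ?thesis
    using Fbased_quant[OF G', of X "(X, A)" "(X @ [(x, A)], a)"] a A type_ctx[OF varsys signature]
    by (simp add: FSig_def LT_def)
qed

lemma Fbased_mor_eq_interp:
  assumes G': "is_Fbased_mor FS LTH C D Fo Fm sg G'"
    and G'_Pred: "\<forall>R GR is. Ps R = Some (GR, is) \<longrightarrow> G' GR (GR, Pred R (map Var (OV GR))) = Rstar R"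
  shows "(X, a) \<in> Form phi Sg Ps \<Longrightarrow> G' X (X, a) = I X a"
proof (induction rule: Form.induct)
  case (atom R GR "is" X as)
  have GR: "Ctx GR \<in> J" and "length as = length GR"
    using atom(2) by (simp_all add: smor_def)
  then have args: "map ((!) as) is = as" and args_OV: "map ((!) (map Var (OV GR))) is = map Var (OV GR)"
    using pred_standard_args[OF pred_standard atom(1), of as]
      pred_standard_args[OF pred_standard atom(1), of "map Var (OV GR)"] by simp_all
  have "(GR, Pred R (map ((!) (map Var (OV GR))) is)) \<in> Form phi Sg Ps"
    by (rule Form.atom[of Ps R GR "is" phi Sg GR "map Var (OV GR)", OF atom(1) smor_id[OF GR]])
  then have "(GR, Pred R (map Var (OV GR))) \<in> Pr LTH GR"
    unfolding args_OV by (simp add: LT_def)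
  moreover have "psub LTH (X, GR, as) (GR, Pred R (map Var (OV GR))) = (X, Pred R as)"
    using map_sub_of_self[OF ctx_distinct[OF varsys signature GR], of as] \<open>length as = length GR\<close>
    by (simp add: LT_def o_def)
  moreover have "(X, GR, as) \<in> Hom FS X GR"
    using atom(2) by (simp add: FSig_def)
  ultimately show ?case
    using Fbased_psub[OF G'] G'_Pred atom(1) args by (fastforce simp: LT_def)
next
  case (conj X a b)
  then show ?case using Fbased_LT_connectives[OF G'] by simp
next
  case (disj X a b)
  then show ?case using Fbased_LT_connectives[OF G'] by simp
next
  case (imp X a b)
  then show ?case using Fbased_LT_connectives[OF G'] by simp
next
  case (all X x A a)
  then show ?case using Fbased_LT_quantifiers[OF G'] by simp
next
  case (ex X x A a)
  then show ?case using Fbased_LT_quantifiers[OF G'] by simp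
qed (use Fbased_heyting_mor[OF G'] in \<open>auto simp: FSig_def LT_def is_heyting_mor_def\<close>)

end

theorem mainTheorem19:
  fixes phi :: "'v set \<Rightarrow> 'v set" and fr :: "'v set \<Rightarrow> 'v"
    and Sg :: "('v, 'f, 't) sig"
    and Ps :: "('v, 'f, 't, 'p) psig"
    and C :: "('o, 'm, 'ty, 'tm) cwf"
    and Fo :: "('v, 'f, 't) ctx \<Rightarrow> 'o"
    and Fm :: "('v, 'f, 't) smorph \<Rightarrow> 'm"
    and sg :: "('v, 'f, 't) ctx \<Rightarrow> ('v, 'f, 't) ctx \<times> ('v, 'f, 't) pty \<Rightarrow> 'ty"
    and th :: "('v, 'f, 't) ctx \<Rightarrow> ('v, 'f, 't) ctx \<times> ('v, 'f, 't) pty \<Rightarrow>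
               (('v, 'f, 't) ctx \<times> ('v, 'f, 't) pty) \<times> ('v, 'f) ptm \<Rightarrow> 'tm"
    and D :: "('o, 'm, 'ty, 'pr) hdoc"
    and Rstar :: "'p \<Rightarrow> 'pr"
  assumes "varsys phi fr" and "debruijn phi fr"
    and "is_signature phi Sg" and "sig_standard Sg"
    and "is_cwf C"
    and "is_cwf_mor (FSig phi fr Sg) C Fo Fm sg th"
    and "is_pred_sig phi Sg Ps" and "pred_standard Ps"
    and "is_hdoc C D"
    and "\<forall>R G is. Ps R = Some (G, is) \<longrightarrow> Rstar R \<in> Pr D (Fo G)"
  shows "\<exists>G. is_Fbased_mor (FSig phi fr Sg) (LT phi fr Sg Ps {}) C D Fo Fm sg G \<and>
            (\<forall>R GR is. Ps R = Some (GR, is) \<longrightarrow> G GR (GR, Pred R (map Var (OV GR))) = Rstar R) \<and>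
            (\<forall>G'. is_Fbased_mor (FSig phi fr Sg) (LT phi fr Sg Ps {}) C D Fo Fm sg G' \<and>
                  (\<forall>R GR is. Ps R = Some (GR, is) \<longrightarrow> G' GR (GR, Pred R (map Var (OV GR))) = Rstar R)
               \<longrightarrow> (\<forall>X \<in> Ob (FSig phi fr Sg). \<forall>a \<in> Pr (LT phi fr Sg Ps {}) X. G' X a = G X a))"
proof -
  interpret LT_initiality phi fr Sg Ps C Fo Fm sg th D Rstar
    using assms by unfold_locales
  have "\<forall>X \<in> Ob FS. \<forall>p \<in> Pr LTH X. G' X p = I X (snd p)"
    if "is_Fbased_mor FS LTH C D Fo Fm sg G'"
      and "\<forall>R GR is. Ps R = Some (GR, is) \<longrightarrow> G' GR (GR, Pred R (map Var (OV GR))) = Rstar R" for G'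
    using Fbased_mor_eq_interp[OF that] by (auto simp: LT_Pr_iff)
  then show ?thesis
    using interp_Fbased_mor interp_Pred_OV by (intro HOL.exI[of _ "\<lambda>X p. I X (snd p)"]) auto
qed

end
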